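(* Let $G$ be a solvable group of derived length $d$. (i) If $\exp(G)$ is odd, then $\exp(G\otimes G)$ divides $(\exp(G))^d$; in particular $\exp(M(G))$ divides $(\exp(G))^d$. (ii) If $\exp(G)$ is even, then $\exp(G\otimes G)$ divides $2^{d-1}(\exp(G))^d$; in particular $\exp(M(G))$ divides $2^{d-1}(\exp(G))^d$.
   Context: Conventions: ${}^g h = ghg^{-1}$, $[g,h]=ghg^{-1}h^{-1}$. The nonabelian tensor square $G\otimes G$ is the group generated by symbols $g\otimes h$ ($g,h\in G$) subject to $gg'\otimes h=({}^g g'\otimes {}^g h)(g\otimes h)$ and $g\otimes hh'=(g\otimes h)({}^h g\otimes {}^h h')$. $M(G)\cong H_2(G,\mathbb{Z})$ is the Schur multiplier. *)

theory Defs
  imports "HOL-Algebra.Algebra"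
begin

text \<open>Words over an alphabet: a letter (x, True) stands for the generator x,
  (x, False) for its formal inverse.\<close>

type_synonym 'x word = "('x \<times> bool) list"

definition word_inv :: "'x word \<Rightarrow> 'x word" where
  "word_inv w = rev (map (\<lambda>(x, b). (x, \<not> b)) w)"

inductive_set pres_eq :: "'x word set \<Rightarrow> ('x word \<times> 'x word) set"
  for R :: "'x word set" where
    refl: "(w, w) \<in> pres_eq R"
  | sym: "(u, v) \<in> pres_eq R \<Longrightarrow> (v, u) \<in> pres_eq R"
  | trans: "(u, v) \<in> pres_eq R \<Longrightarrow> (v, w) \<in> pres_eq R \<Longrightarrow> (u, w) \<in> pres_eq R"
  | cancel: "(u @ [(x, b), (x, \<not> b)] @ v, u @ v) \<in> pres_eq R"
  | relator: "r \<in> R \<Longrightarrow> (u @ r @ v, u @ v) \<in> pres_eq R"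

definition pres_class :: "'x word set \<Rightarrow> 'x word \<Rightarrow> 'x word set" where
  "pres_class R w = {v. (w, v) \<in> pres_eq R}"

definition presented_group :: "'x set \<Rightarrow> 'x word set \<Rightarrow> 'x word set monoid" where
  "presented_group Gens R =
     \<lparr> carrier = {pres_class R w | w. (\<forall>l\<in>set w. fst l \<in> Gens)},
       monoid.mult = (\<lambda>A B. pres_class R ((SOME a. a \<in> A) @ (SOME b. b \<in> B))),
       monoid.one = pres_class R [] \<rparr>"

definition gconj :: "('a, 'b) monoid_scheme \<Rightarrow> 'a \<Rightarrow> 'a \<Rightarrow> 'a" where
  "gconj G g h = g \<otimes>\<^bsub>G\<^esub> h \<otimes>\<^bsub>G\<^esub> inv\<^bsub>G\<^esub> g"

text \<open>Generator (g, h) stands for g \<otimes> h.  Relators: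
  gg' (x) h = (gconj g g' (x) gconj g h)(g (x) h) and g (x) hh' = (g (x) h)(gconj h g (x) gconj h h').\<close>

definition tensor_relators :: "('a, 'b) monoid_scheme \<Rightarrow> ('a \<times> 'a) word set" where
  "tensor_relators G =
     {[((g \<otimes>\<^bsub>G\<^esub> g', h), True), ((g, h), False), ((gconj G g g', gconj G g h), False)]
        | g g' h. g \<in> carrier G \<and> g' \<in> carrier G \<and> h \<in> carrier G}
   \<union> {[((g, h \<otimes>\<^bsub>G\<^esub> h'), True), ((gconj G h g, gconj G h h'), False), ((g, h), False)]
        | g h h'. g \<in> carrier G \<and> h \<in> carrier G \<and> h' \<in> carrier G}"

definition tensor_square :: "('a, 'b) monoid_scheme \<Rightarrow> ('a \<times> 'a) word set monoid" where
  "tensor_square G = presented_group (Sigma (carrier G) (\<lambda>_. carrier G)) (tensor_relators G)"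

definition word_eval :: "('a, 'b) monoid_scheme \<Rightarrow> 'a word \<Rightarrow> 'a" where
  "word_eval G w = foldr (\<lambda>(x, b) acc. (if b then x else inv\<^bsub>G\<^esub> x) \<otimes>\<^bsub>G\<^esub> acc) w \<one>\<^bsub>G\<^esub>"

definition free_on_carrier :: "('a, 'b) monoid_scheme \<Rightarrow> 'a word set monoid" where
  "free_on_carrier G = presented_group (carrier G) {}"

definition hopf_R :: "('a, 'b) monoid_scheme \<Rightarrow> 'a word set set" where
  "hopf_R G = {c \<in> carrier (free_on_carrier G).
                 \<exists>w \<in> c. (\<forall>l\<in>set w. fst l \<in> carrier G) \<and> word_eval G w = \<one>\<^bsub>G\<^esub>}"

definition mixed_commutator :: "('a, 'b) monoid_scheme \<Rightarrow> 'a set \<Rightarrow> 'a set \<Rightarrow> 'a set" where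
  "mixed_commutator G H K =
     generate G {h \<otimes>\<^bsub>G\<^esub> k \<otimes>\<^bsub>G\<^esub> inv\<^bsub>G\<^esub> h \<otimes>\<^bsub>G\<^esub> inv\<^bsub>G\<^esub> k | h k. h \<in> H \<and> k \<in> K}"

text \<open>Hopf: M(G) = (R \<inter> [F,F]) / [F,R].\<close>

definition schur_multiplier :: "('a, 'b) monoid_scheme \<Rightarrow> 'a word set set monoid" where
  "schur_multiplier G =
     (let F = free_on_carrier G; R = hopf_R G in
       (F\<lparr>carrier := R \<inter> mixed_commutator F (carrier F) (carrier F)\<rparr>)
         Mod (mixed_commutator F (carrier F) R))"

definition group_exponent :: "('a, 'b) monoid_scheme \<Rightarrow> nat" where
  "group_exponent G =
     (if \<exists>n::nat>0. \<forall>x\<in>carrier G. x [^]\<^bsub>G\<^esub> n = \<one>\<^bsub>G\<^esub>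
      then LEAST n::nat. n > 0 \<and> (\<forall>x\<in>carrier G. x [^]\<^bsub>G\<^esub> n = \<one>\<^bsub>G\<^esub>)
      else 0)"

definition derived_length :: "('a, 'b) monoid_scheme \<Rightarrow> nat" where
  "derived_length G = (LEAST n. (derived G ^^ n) (carrier G) = {\<one>\<^bsub>G\<^esub>})"

end

theory Submission
  imports Defs
begin

text \<open>
  The tensor square \<open>G \<otimes> G\<close> carries the diagonal conjugation action of \<open>G\<close> and the
  commutator map \<open>\<kappa> : g \<otimes> h \<mapsto> [g, h]\<close>, and conjugation by \<open>t\<close> in \<open>G \<otimes> G\<close> is the action of
  \<open>\<kappa>(t)\<close>. For normal subgroups with \<open>[N, N] \<subseteq> M\<close> let \<open>K\<^sub>N\<close> be the subgroup generated by the
  \<open>n \<otimes> g\<close> and \<open>g \<otimes> n\<close> with \<open>n \<in> N\<close>. Modulo \<open>K\<^sub>M\<close> the tensors \<open>x \<otimes> y\<close> with \<open>x, y \<in> N\<close> are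
  central, bilinear and killed by \<open>e = exp G\<close>, so elements of \<open>K\<^sub>N\<close> commute, and are moved by
  \<open>N\<close>, only up to central factors of order dividing \<open>e\<close>. The identity
  \<open>(a b)\<^sup>n = z\<^bsup>n(n-1)/2\<^esup> a\<^sup>n b\<^sup>n\<close> for \<open>b a = z a b\<close> with \<open>z\<close> central then gives
  \<open>s\<^sup>e \<in> K\<^sub>M\<close> for \<open>s \<in> K\<^sub>N\<close> if \<open>e\<close> is odd, \<open>s\<^bsup>2e\<^esup> \<in> K\<^sub>M\<close> always, and \<open>s\<^sup>e \<in> K\<^sub>M\<close> if
  \<open>[N, G] \<subseteq> M\<close>. Descending the derived series, whose first step is of the last kind, bounds
  \<open>exp (G \<otimes> G)\<close>. By Hopf's formula \<open>M(G)\<close> lies in \<open>[F, F]/[F, R]\<close>, the image of \<open>G \<otimes> G\<close>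
  under \<open>g \<otimes> h \<mapsto> [g', h']\<close> for lifts \<open>g', h' \<in> F\<close> of \<open>g, h\<close>, so \<open>exp M(G)\<close> divides
  \<open>exp (G \<otimes> G)\<close>.
\<close>

section \<open>Presented groups\<close>

definition word_over :: "'x set \<Rightarrow> 'x word \<Rightarrow> bool" where
  "word_over Gs w \<longleftrightarrow> (\<forall>l\<in>set w. fst l \<in> Gs)"

lemma word_over_simps[simp]:
  "word_over Gs []" "word_over Gs (l # w) \<longleftrightarrow> fst l \<in> Gs \<and> word_over Gs w"
  "word_over Gs (u @ v) \<longleftrightarrow> word_over Gs u \<and> word_over Gs v"
  by (auto simp: word_over_def)

lemma pres_eq_append_cong:
  assumes "(u, v) \<in> pres_eq R"
  shows "(p @ u @ q, p @ v @ q) \<in> pres_eq R"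
  using assms
proof (induction rule: pres_eq.induct)
  case (refl w) then show ?case by (rule pres_eq.refl)
next
  case (sym u v) show ?case by (rule pres_eq.sym[OF sym.IH])
next
  case (trans u v w) show ?case by (rule pres_eq.trans[OF trans.IH])
next
  case (cancel u x b v)
  have "((p @ u) @ [(x, b), (x, \<not> b)] @ (v @ q), (p @ u) @ (v @ q)) \<in> pres_eq R"
    by (rule pres_eq.cancel)
  then show ?case by simp
next
  case (relator r u v)
  have "((p @ u) @ r @ (v @ q), (p @ u) @ (v @ q)) \<in> pres_eq R"
    by (rule pres_eq.relator[OF relator])
  then show ?case by simp
qed

lemma pres_eq_append:
  assumes "(u, v) \<in> pres_eq R" "(u', v') \<in> pres_eq R"
  shows "(u @ u', v @ v') \<in> pres_eq R"
proof -
  have "([] @ u @ u', [] @ v @ u') \<in> pres_eq R" by (rule pres_eq_append_cong[OF assms(1)])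
  moreover have "(v @ u' @ [], v @ v' @ []) \<in> pres_eq R" by (rule pres_eq_append_cong[OF assms(2)])
  ultimately show ?thesis by (auto intro: pres_eq.trans)
qed

lemma pres_class_self: "w \<in> pres_class R w"
  by (simp add: pres_class_def pres_eq.refl)

lemma pres_class_eq_iff: "pres_class R u = pres_class R v \<longleftrightarrow> (u, v) \<in> pres_eq R"
proof
  assume "pres_class R u = pres_class R v"
  then have "v \<in> pres_class R u" using pres_class_self by simp
  then show "(u, v) \<in> pres_eq R" by (simp add: pres_class_def)
next
  assume "(u, v) \<in> pres_eq R"
  then show "pres_class R u = pres_class R v"
    unfolding pres_class_def by (auto intro: pres_eq.trans pres_eq.sym)
qed

lemma pres_eq_some_pres_class: "(w, SOME a. a \<in> pres_class R w) \<in> pres_eq R"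
proof -
  have "(SOME a. a \<in> pres_class R w) \<in> pres_class R w" by (rule someI, rule pres_class_self)
  then show ?thesis by (simp add: pres_class_def)
qed

lemma presented_group_mult:
  "pres_class R u \<otimes>\<^bsub>presented_group Gs R\<^esub> pres_class R v = pres_class R (u @ v)"
  unfolding presented_group_def
  by (simp add: pres_class_eq_iff pres_eq_append pres_eq.sym pres_eq_some_pres_class)

lemma presented_group_one: "\<one>\<^bsub>presented_group Gs R\<^esub> = pres_class R []"
  by (simp add: presented_group_def)

lemma carrier_presented_group:
  "carrier (presented_group Gs R) = {pres_class R w | w. word_over Gs w}"
  by (simp add: presented_group_def word_over_def)

lemma word_inv_simps[simp]:
  "word_inv [] = []" "word_inv (l # w) = word_inv w @ [(fst l, \<not> snd l)]"
  "word_inv (u @ v) = word_inv v @ word_inv u"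
  by (auto simp: word_inv_def split: prod.splits)

lemma word_over_word_inv[simp]: "word_over Gs (word_inv w) = word_over Gs w"
  by (induction w) auto

lemma pres_eq_word_inv_cancel: "(word_inv w @ w, []) \<in> pres_eq R"
proof (induction w)
  case Nil then show ?case by (simp add: pres_eq.refl)
next
  case (Cons l w)
  obtain x b where l: "l = (x, b)" by force
  have "(word_inv w @ [(x, \<not> b), (x, \<not> \<not> b)] @ w, word_inv w @ w) \<in> pres_eq R"
    by (rule pres_eq.cancel)
  then have "(word_inv (l # w) @ l # w, word_inv w @ w) \<in> pres_eq R" by (simp add: l)
  then show ?case using Cons by (blast intro: pres_eq.trans)
qed

lemma group_presented_group: "group (presented_group Gs R)"
proof (rule groupI)
  fix A assume "A \<in> carrier (presented_group Gs R)"
  then obtain w where A: "A = pres_class R w" "word_over Gs w"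
    by (auto simp: carrier_presented_group)
  show "\<exists>B\<in>carrier (presented_group Gs R). B \<otimes>\<^bsub>presented_group Gs R\<^esub> A = \<one>\<^bsub>presented_group Gs R\<^esub>"
  proof
    show "pres_class R (word_inv w) \<otimes>\<^bsub>presented_group Gs R\<^esub> A = \<one>\<^bsub>presented_group Gs R\<^esub>"
      using A by (simp add: presented_group_mult presented_group_one pres_class_eq_iff
          pres_eq_word_inv_cancel)
    show "pres_class R (word_inv w) \<in> carrier (presented_group Gs R)"
      using A by (auto simp: carrier_presented_group)
  qed
qed (auto simp: carrier_presented_group presented_group_mult presented_group_one
    intro: exI[of _ "[]"])

definition eval_word :: "('c, 'd) monoid_scheme \<Rightarrow> ('x \<Rightarrow> 'c) \<Rightarrow> 'x word \<Rightarrow> 'c" where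
  "eval_word H f w = foldr (\<lambda>(x, b) acc. (if b then f x else inv\<^bsub>H\<^esub> f x) \<otimes>\<^bsub>H\<^esub> acc) w \<one>\<^bsub>H\<^esub>"

lemma eval_word_simps[simp]:
  "eval_word H f [] = \<one>\<^bsub>H\<^esub>"
  "eval_word H f (l # w) = (if snd l then f (fst l) else inv\<^bsub>H\<^esub> f (fst l)) \<otimes>\<^bsub>H\<^esub> eval_word H f w"
  by (auto simp: eval_word_def split: prod.splits)

context group
begin

lemma eval_word_closed: "(\<And>x. f x \<in> carrier G) \<Longrightarrow> eval_word G f w \<in> carrier G"
  by (induction w) auto

lemma eval_word_append:
  assumes "\<And>x. f x \<in> carrier G"
  shows "eval_word G f (u @ v) = eval_word G f u \<otimes> eval_word G f v"
  using assms by (induction u) (auto simp: eval_word_closed m_assoc)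

lemma eval_word_pres_eq:
  assumes "\<And>x. f x \<in> carrier G" "\<And>r. r \<in> R \<Longrightarrow> eval_word G f r = \<one>"
    and "(u, v) \<in> pres_eq R"
  shows "eval_word G f u = eval_word G f v"
  using assms(3)
proof (induction rule: pres_eq.induct)
  case (cancel u x b v)
  have "eval_word G f [(x, b), (x, \<not> b)] = \<one>"
    using assms(1)[of x] by auto
  then show ?case
    using assms(1) by (simp only: eval_word_append) (simp add: eval_word_closed)
next
  case (relator r u v)
  then show ?case
    using assms by (simp only: eval_word_append) (simp add: eval_word_closed)
qed auto

end

definition presented_lift :: "('c, 'd) monoid_scheme \<Rightarrow> ('x \<Rightarrow> 'c) \<Rightarrow> 'x word set \<Rightarrow> 'c" where
  "presented_lift H f A = eval_word H f (SOME a. a \<in> A)"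

definition pres_gen :: "'x word set \<Rightarrow> 'x \<Rightarrow> 'x word set" where
  "pres_gen R x = pres_class R [(x, True)]"

lemma presented_lift:
  assumes "group H" and closed: "\<And>x. f x \<in> carrier H"
    and relators: "\<And>r. r \<in> R \<Longrightarrow> eval_word H f r = \<one>\<^bsub>H\<^esub>"
  shows presented_lift_class: "presented_lift H f (pres_class R w) = eval_word H f w"
    and presented_lift_hom: "presented_lift H f \<in> hom (presented_group Gs R) H"
    and presented_lift_gen: "presented_lift H f (pres_gen R x) = f x"
proof -
  interpret H: group H by fact
  show on_class: "presented_lift H f (pres_class R v) = eval_word H f v" for v
    unfolding presented_lift_def
    by (metis H.eval_word_pres_eq[OF closed relators] pres_eq_some_pres_class)
  show "presented_lift H f \<in> hom (presented_group Gs R) H"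
    by (rule homI)
      (auto simp: carrier_presented_group presented_group_mult on_class
        H.eval_word_closed closed H.eval_word_append)
  show "presented_lift H f (pres_gen R x) = f x"
    using closed[of x] by (simp add: pres_gen_def on_class)
qed

lemma pres_gen_closed: "x \<in> Gs \<Longrightarrow> pres_gen R x \<in> carrier (presented_group Gs R)"
  by (auto simp: pres_gen_def carrier_presented_group intro!: exI[of _ "[(x, True)]"])

lemma inv_pres_gen:
  assumes "x \<in> Gs"
  shows "inv\<^bsub>presented_group Gs R\<^esub> pres_gen R x = pres_class R [(x, False)]"
proof -
  interpret P: group "presented_group Gs R" by (rule group_presented_group)
  have "pres_class R [(x, False)] \<otimes>\<^bsub>presented_group Gs R\<^esub> pres_gen R x = \<one>\<^bsub>presented_group Gs R\<^esub>"
    unfolding pres_gen_def presented_group_mult presented_group_one pres_class_eq_iff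
    using pres_eq.cancel[of "[]" x False "[]" R] by simp
  moreover have "pres_class R [(x, False)] \<in> carrier (presented_group Gs R)"
    using assms by (auto simp: carrier_presented_group intro!: exI[of _ "[(x, False)]"])
  ultimately show ?thesis using P.inv_equality pres_gen_closed[OF assms] by blast
qed

lemma pres_class_relator: "r \<in> R \<Longrightarrow> pres_class R r = \<one>\<^bsub>presented_group Gs R\<^esub>"
  unfolding presented_group_one pres_class_eq_iff using pres_eq.relator[of r R "[]" "[]"] by simp

lemma presented_group_induct[consumes 1, case_names one gen inv_gen mult]:
  assumes "A \<in> carrier (presented_group Gs R)"
    and one: "P \<one>\<^bsub>presented_group Gs R\<^esub>"
    and gen: "\<And>x. x \<in> Gs \<Longrightarrow> P (pres_gen R x)"
    and inv_gen: "\<And>x. x \<in> Gs \<Longrightarrow> P (inv\<^bsub>presented_group Gs R\<^esub> pres_gen R x)"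
    and mult: "\<And>a b. a \<in> carrier (presented_group Gs R) \<Longrightarrow> b \<in> carrier (presented_group Gs R)
      \<Longrightarrow> P a \<Longrightarrow> P b \<Longrightarrow> P (a \<otimes>\<^bsub>presented_group Gs R\<^esub> b)"
  shows "P A"
proof -
  obtain w where A: "A = pres_class R w" "word_over Gs w"
    using assms(1) by (auto simp: carrier_presented_group)
  have "P (pres_class R w) \<and> pres_class R w \<in> carrier (presented_group Gs R)"
    using A(2)
  proof (induction w)
    case Nil then show ?case
      using one by (auto simp: presented_group_one carrier_presented_group)
  next
    case (Cons l w)
    obtain x b where l: "l = (x, b)" by force
    have x: "x \<in> Gs" using Cons.prems l by simp
    have "P (pres_class R [l]) \<and> pres_class R [l] \<in> carrier (presented_group Gs R)"
    proof (cases b)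
      case True then show ?thesis using gen[OF x] pres_gen_closed[OF x] l by (simp add: pres_gen_def)
    next
      case False then show ?thesis
        using inv_gen[OF x] inv_pres_gen[OF x, of R] l
        by (auto simp: carrier_presented_group intro!: exI[of _ "[(x, False)]"] x)
    qed
    moreover have "pres_class R (l # w) = pres_class R [l] \<otimes>\<^bsub>presented_group Gs R\<^esub> pres_class R w"
      by (simp add: presented_group_mult)
    ultimately show ?case
      using Cons mult monoid.m_closed[OF group.is_monoid[OF group_presented_group]] by auto
  qed
  then show ?thesis using A(1) by simp
qed

definition commutator :: "('a, 'b) monoid_scheme \<Rightarrow> 'a \<Rightarrow> 'a \<Rightarrow> 'a" where
  "commutator G g h = g \<otimes>\<^bsub>G\<^esub> h \<otimes>\<^bsub>G\<^esub> inv\<^bsub>G\<^esub> g \<otimes>\<^bsub>G\<^esub> inv\<^bsub>G\<^esub> h"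

definition central_torsion :: "('a, 'b) monoid_scheme \<Rightarrow> nat \<Rightarrow> 'a set" where
  "central_torsion G k =
     {z \<in> carrier G. (\<forall>q\<in>carrier G. z \<otimes>\<^bsub>G\<^esub> q = q \<otimes>\<^bsub>G\<^esub> z) \<and> z [^]\<^bsub>G\<^esub> k = \<one>\<^bsub>G\<^esub>}"

lemma hom_inv_group:
  "\<lbrakk>h \<in> hom G H; x \<in> carrier G; group G; group H\<rbrakk> \<Longrightarrow> h (inv\<^bsub>G\<^esub> x) = inv\<^bsub>H\<^esub> (h x)"
  by (simp add: group_hom.hom_inv group_hom_axioms_def group_hom_def)

lemma zero_choose_two[simp]: "0 choose 2 = 0"
  by (simp add: binomial_eq_0)

lemma Suc_choose_two: "Suc n choose 2 = (n choose 2) + n"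
  by (simp add: numeral_2_eq_2)

lemma odd_dvd_choose_two:
  assumes "odd e"
  shows "e dvd (e choose 2)"
proof -
  obtain b where "e = 2 * b + 1" using assms by (rule oddE)
  then have "e choose 2 = e * b" by (simp add: choose_two)
  then show ?thesis by simp
qed

lemma dvd_choose_two_mult_two: "e dvd (e choose 2) * 2"
proof -
  have "even (e * (e - 1))" by (cases e) auto
  then show ?thesis by (simp add: choose_two)
qed

lemma dvd_double_choose_two: "e dvd (e * 2 choose 2)"
  by (simp add: choose_two)

context group
begin

lemma mult_inv_cancel_left[simp]: "x \<in> carrier G \<Longrightarrow> y \<in> carrier G \<Longrightarrow> x \<otimes> (inv x \<otimes> y) = y"
  by (simp add: m_assoc[symmetric])

lemma inv_mult_cancel_left[simp]: "x \<in> carrier G \<Longrightarrow> y \<in> carrier G \<Longrightarrow> inv x \<otimes> (x \<otimes> y) = y"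
  by (simp add: m_assoc[symmetric])

lemma commutator_closed[simp]:
  "g \<in> carrier G \<Longrightarrow> h \<in> carrier G \<Longrightarrow> commutator G g h \<in> carrier G"
  by (simp add: commutator_def)

lemma gconj_closed[simp]: "g \<in> carrier G \<Longrightarrow> h \<in> carrier G \<Longrightarrow> gconj G g h \<in> carrier G"
  by (simp add: gconj_def)

lemma gconj_mult:
  "x \<in> carrier G \<Longrightarrow> a \<in> carrier G \<Longrightarrow> b \<in> carrier G \<Longrightarrow>
   gconj G x (a \<otimes> b) = gconj G x a \<otimes> gconj G x b"
  by (simp add: gconj_def m_assoc)

lemma gconj_gconj:
  "x \<in> carrier G \<Longrightarrow> a \<in> carrier G \<Longrightarrow> b \<in> carrier G \<Longrightarrow>
   gconj G x (gconj G a b) = gconj G (gconj G x a) (gconj G x b)"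
  by (simp add: gconj_def m_assoc inv_mult_group)

lemma gconj_gconj_mult:
  "x \<in> carrier G \<Longrightarrow> y \<in> carrier G \<Longrightarrow> b \<in> carrier G \<Longrightarrow>
   gconj G x (gconj G y b) = gconj G (x \<otimes> y) b"
  by (simp add: gconj_def m_assoc inv_mult_group)

lemma gconj_one[simp]: "b \<in> carrier G \<Longrightarrow> gconj G \<one> b = b"
  by (simp add: gconj_def)

lemma gconj_eq_commutator_mult:
  "x \<in> carrier G \<Longrightarrow> y \<in> carrier G \<Longrightarrow> gconj G x y = commutator G x y \<otimes> y"
  by (simp add: gconj_def commutator_def m_assoc)

lemma conj_hom: "c \<in> carrier G \<Longrightarrow> (\<lambda>s. c \<otimes> s \<otimes> inv c) \<in> hom G G"
  by (rule homI) (auto simp: m_assoc)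

lemma commutator_mult_left:
  "a \<in> carrier G \<Longrightarrow> b \<in> carrier G \<Longrightarrow> c \<in> carrier G \<Longrightarrow>
   commutator G (a \<otimes> b) c = commutator G (a \<otimes> b \<otimes> inv a) (a \<otimes> c \<otimes> inv a) \<otimes> commutator G a c"
  by (simp add: commutator_def m_assoc inv_mult_group)

lemma commutator_mult_right:
  "a \<in> carrier G \<Longrightarrow> c \<in> carrier G \<Longrightarrow> c' \<in> carrier G \<Longrightarrow>
   commutator G a (c \<otimes> c') = commutator G a c \<otimes> commutator G (c \<otimes> a \<otimes> inv c) (c \<otimes> c' \<otimes> inv c)"
  by (simp add: commutator_def m_assoc inv_mult_group)

lemma conj_commutator:
  "g \<in> carrier G \<Longrightarrow> h \<in> carrier G \<Longrightarrow> k \<in> carrier G \<Longrightarrow>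
   g \<otimes> commutator G h k \<otimes> inv g = commutator G (g \<otimes> h \<otimes> inv g) (g \<otimes> k \<otimes> inv g)"
  by (simp add: commutator_def m_assoc inv_mult_group)

lemma commutator_eq_one_imp_commute:
  assumes "a \<in> carrier G" "b \<in> carrier G" "commutator G a b = \<one>"
  shows "a \<otimes> b = b \<otimes> a"
proof -
  have "a \<otimes> b = commutator G a b \<otimes> b \<otimes> a" using assms(1,2) by (simp add: commutator_def m_assoc)
  then show ?thesis using assms by simp
qed

lemma commutator_mult_central:
  assumes z: "\<And>q. q \<in> carrier G \<Longrightarrow> z \<otimes> q = q \<otimes> z" and w: "\<And>q. q \<in> carrier G \<Longrightarrow> w \<otimes> q = q \<otimes> w"
    and c: "a \<in> carrier G" "b \<in> carrier G" "z \<in> carrier G" "w \<in> carrier G"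
  shows "commutator G (a \<otimes> z) (b \<otimes> w) = commutator G a b"
proof -
  have swap: "u \<otimes> (x \<otimes> y) = x \<otimes> (u \<otimes> y)"
    if "\<And>q. q \<in> carrier G \<Longrightarrow> u \<otimes> q = q \<otimes> u" "u \<in> carrier G" "x \<in> carrier G" "y \<in> carrier G"
    for u x y
    using that(1)[of x] that(2-4) by (simp add: m_assoc[symmetric])
  show ?thesis
    using c by (simp add: commutator_def m_assoc inv_mult_group swap[OF z] swap[OF w])
qed

lemma commutator_mem_normal:
  assumes "N \<lhd> G" "n \<in> N" "g \<in> carrier G"
  shows "commutator G n g \<in> N" "commutator G g n \<in> N"
proof -
  interpret N: normal N G by fact
  have n: "n \<in> carrier G" using assms N.subset by blast
  have "g \<otimes> inv n \<otimes> inv g \<in> N" using assms by (intro N.inv_op_closed2) auto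
  then have "n \<otimes> (g \<otimes> inv n \<otimes> inv g) \<in> N" using assms by (rule_tac N.m_closed) auto
  then show "commutator G n g \<in> N" using n assms by (simp add: commutator_def m_assoc)
  have "g \<otimes> n \<otimes> inv g \<in> N" using assms by (intro N.inv_op_closed2) auto
  then have "(g \<otimes> n \<otimes> inv g) \<otimes> inv n \<in> N" using assms by (rule_tac N.m_closed) auto
  then show "commutator G g n \<in> N" using n assms by (simp add: commutator_def m_assoc)
qed

lemma central_torsionD:
  assumes "z \<in> central_torsion G k"
  shows central_torsion_closed: "z \<in> carrier G"
    and central_torsion_commute: "q \<in> carrier G \<Longrightarrow> z \<otimes> q = q \<otimes> z"
    and central_torsion_pow: "z [^] k = \<one>"
  using assms by (auto simp: central_torsion_def)

lemma central_torsion_one: "\<one> \<in> central_torsion G k"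
  by (simp add: central_torsion_def)

lemma central_torsion_mult:
  assumes "z \<in> central_torsion G k" "w \<in> central_torsion G k"
  shows "z \<otimes> w \<in> central_torsion G k"
proof -
  note z = central_torsionD[OF assms(1)] and w = central_torsionD[OF assms(2)]
  have "z \<otimes> w \<otimes> q = q \<otimes> (z \<otimes> w)" if q: "q \<in> carrier G" for q
  proof -
    have "z \<otimes> w \<otimes> q = (z \<otimes> q) \<otimes> w"
      using z(1) w(1) q by (simp add: m_assoc w(2)[OF q])
    then show ?thesis using z(1) w(1) q by (simp add: m_assoc z(2)[OF q])
  qed
  moreover have "(z \<otimes> w) [^] k = \<one>"
    using pow_mult_distrib[OF z(2)[OF w(1)] z(1) w(1)] z(3) w(3) by simp
  ultimately show ?thesis using z(1) w(1) by (simp add: central_torsion_def)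
qed

lemma central_torsion_inv:
  assumes "z \<in> central_torsion G k"
  shows "inv z \<in> central_torsion G k"
proof -
  note z = central_torsionD[OF assms]
  have "inv z \<otimes> q = q \<otimes> inv z" if q: "q \<in> carrier G" for q
  proof -
    have "inv z \<otimes> q = inv z \<otimes> (z \<otimes> (q \<otimes> inv z))"
      using z(1) q z(2)[of "q \<otimes> inv z"] by (simp add: m_assoc)
    then show ?thesis using z(1) q by simp
  qed
  then show ?thesis using z(1,3) by (simp add: central_torsion_def nat_pow_inv)
qed

lemma central_torsion_pow_dvd:
  assumes "z \<in> central_torsion G k" "k dvd r"
  shows "z [^] r = \<one>"
proof -
  obtain u where "r = k * u" using assms(2) by blast
  then show ?thesis using central_torsionD[OF assms(1)] by (simp add: nat_pow_pow[symmetric])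
qed

text \<open>Sorting \<open>(a b)\<^sup>n\<close> into \<open>a\<^sup>n b\<^sup>n\<close> takes \<open>n(n-1)/2\<close> transpositions, each contributing a factor \<open>z\<close>.\<close>

lemma pow_mult_twisted:
  assumes c: "a \<in> carrier G" "b \<in> carrier G" "z \<in> carrier G"
    and zc: "\<And>q. q \<in> carrier G \<Longrightarrow> z \<otimes> q = q \<otimes> z"
    and ba: "b \<otimes> a = z \<otimes> (a \<otimes> b)"
  shows "(a \<otimes> b) [^] (n::nat) = z [^] (n choose 2) \<otimes> (a [^] n \<otimes> b [^] n)"
proof -
  have swap: "b [^] m \<otimes> a = z [^] m \<otimes> (a \<otimes> b [^] m)" for m :: nat
  proof (induction m)
    case 0 then show ?case using c by simp
  next
    case (Suc m)
    have "b [^] Suc m \<otimes> a = b [^] m \<otimes> (z \<otimes> (a \<otimes> b))"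
      using c by (simp add: nat_pow_Suc2 m_assoc ba)
    also have "\<dots> = z \<otimes> ((b [^] m \<otimes> a) \<otimes> b)"
      using c zc[of "b [^] m"] by (simp add: m_assoc[symmetric])
    also have "\<dots> = z [^] Suc m \<otimes> (a \<otimes> b [^] Suc m)"
      using c by (simp only: nat_pow_Suc2[OF c(3)]) (simp add: Suc m_assoc)
    finally show ?case .
  qed
  show ?thesis
  proof (induction n)
    case 0 then show ?case using c by simp
  next
    case (Suc n)
    have "(a \<otimes> b) [^] Suc n = z [^] (n choose 2) \<otimes> (a [^] n \<otimes> (b [^] n \<otimes> a) \<otimes> b)"
      using c by (simp add: Suc m_assoc)
    also have "\<dots> = z [^] (n choose 2) \<otimes> (z [^] n \<otimes> (a [^] n \<otimes> a) \<otimes> (b [^] n \<otimes> b))"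
      using c group_commutes_pow[OF zc[of "a [^] n"]]
      by (simp add: swap m_assoc[symmetric])
    also have "\<dots> = z [^] (Suc n choose 2) \<otimes> (a [^] Suc n \<otimes> b [^] Suc n)"
      using c by (simp add: nat_pow_mult[symmetric] Suc_choose_two m_assoc)
    finally show ?case .
  qed
qed

lemma twisted_recurrence_left:
  assumes z: "z \<in> carrier G" "\<And>q. q \<in> carrier G \<Longrightarrow> z \<otimes> q = q \<otimes> z" and p: "p \<in> carrier G"
    and "x 0 = \<one>" "\<And>j. x (Suc j) = z [^] j \<otimes> p \<otimes> x j"
  shows "x j = z [^] (j choose 2) \<otimes> p [^] j"
proof (induction j)
  case (Suc j)
  have "x (Suc j) = z [^] j \<otimes> (p \<otimes> z [^] (j choose 2)) \<otimes> p [^] j"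
    using z(1) p Suc assms(5) by (simp add: m_assoc)
  also have "p \<otimes> z [^] (j choose 2) = z [^] (j choose 2) \<otimes> p"
    using group_commutes_pow[OF z(2)[OF p]] z(1) p by simp
  also have "z [^] j \<otimes> (z [^] (j choose 2) \<otimes> p) \<otimes> p [^] j = (z [^] j \<otimes> z [^] (j choose 2)) \<otimes> (p \<otimes> p [^] j)"
    using z(1) p by (simp add: m_assoc)
  also have "\<dots> = z [^] (Suc j choose 2) \<otimes> p [^] Suc j"
    using z(1) p by (simp add: nat_pow_mult Suc_choose_two add.commute nat_pow_Suc2[symmetric])
  finally show ?case .
qed (use assms(4) in simp)

lemma twisted_recurrence_right:
  assumes z: "z \<in> carrier G" "\<And>q. q \<in> carrier G \<Longrightarrow> z \<otimes> q = q \<otimes> z" and p: "p \<in> carrier G"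
    and "x 0 = \<one>" "\<And>j. x (Suc j) = x j \<otimes> (z [^] j \<otimes> p)"
  shows "x j = z [^] (j choose 2) \<otimes> p [^] j"
proof (induction j)
  case (Suc j)
  have "x (Suc j) = z [^] (j choose 2) \<otimes> (p [^] j \<otimes> z [^] j) \<otimes> p"
    using z(1) p Suc assms(5) by (simp add: m_assoc)
  also have "p [^] j \<otimes> z [^] j = z [^] j \<otimes> p [^] j"
    using group_commutes_pow[OF z(2)[of "p [^] j"]] z(1) p by simp
  also have "z [^] (j choose 2) \<otimes> (z [^] j \<otimes> p [^] j) \<otimes> p = (z [^] (j choose 2) \<otimes> z [^] j) \<otimes> (p [^] j \<otimes> p)"
    using z(1) p by (simp add: m_assoc)
  also have "\<dots> = z [^] (Suc j choose 2) \<otimes> p [^] Suc j"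
    using z(1) p by (simp add: nat_pow_mult Suc_choose_two)
  finally show ?case .
qed (use assms(4) in simp)

lemma pow_eq_one_of_twisted:
  assumes z: "z \<in> central_torsion G k" and p: "p \<in> carrier G"
    and twisted: "z [^] (e choose 2) \<otimes> p [^] e = \<one>" and k: "k dvd (e choose 2) * m"
  shows "p [^] (e * m) = \<one>"
proof -
  have zc: "z \<in> carrier G" using central_torsionD[OF z] by blast
  have "inv (p [^] e) = z [^] (e choose 2)"
    using inv_equality[OF twisted] zc p by simp
  then have "p [^] e = inv (z [^] (e choose 2))"
    using p by (metis inv_inv nat_pow_closed)
  then have "p [^] (e * m) = inv (z [^] ((e choose 2) * m))"
    using zc p by (simp add: nat_pow_pow[symmetric] nat_pow_inv)
  then show ?thesis using central_torsion_pow_dvd[OF z k] by simp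
qed

end

lemma (in monoid) pow_group_exponent:
  assumes "x \<in> carrier G"
  shows "x [^] group_exponent G = \<one>"
proof (cases "\<exists>n::nat>0. \<forall>x\<in>carrier G. x [^] n = \<one>")
  case True
  from LeastI_ex[OF True] show ?thesis
    unfolding group_exponent_def if_P[OF True] using assms by blast
next
  case False
  then show ?thesis unfolding group_exponent_def if_not_P[OF False] by simp
qed

lemma (in monoid) group_exponent_dvd:
  assumes B: "\<And>x. x \<in> carrier G \<Longrightarrow> x [^] B = \<one>"
  shows "group_exponent G dvd B"
proof (cases "B = 0")
  case False
  have ex: "\<exists>n::nat>0. \<forall>x\<in>carrier G. x [^] n = \<one>" using False B by blast
  define m where "m = (LEAST n::nat. n > 0 \<and> (\<forall>x\<in>carrier G. x [^] n = \<one>))"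
  have exponent: "group_exponent G = m" using ex by (simp add: group_exponent_def m_def)
  have m: "m > 0" "\<forall>x\<in>carrier G. x [^] m = \<one>"
    using LeastI_ex[OF ex] unfolding m_def by auto
  have "x [^] (B mod m) = \<one>" if x: "x \<in> carrier G" for x
  proof -
    have "\<one> = x [^] (m * (B div m)) \<otimes> x [^] (B mod m)"
      using x B by (simp add: nat_pow_mult)
    also have "x [^] (m * (B div m)) = \<one>"
      using x m by (simp add: nat_pow_pow[symmetric])
    finally show ?thesis using x by simp
  qed
  then have "\<not> B mod m > 0"
    using Least_le[of "\<lambda>n. n > 0 \<and> (\<forall>x\<in>carrier G. x [^] n = \<one>)" "B mod m"] m
    unfolding m_def[symmetric] by (meson mod_less_divisor not_le)
  then show ?thesis using exponent by (simp add: mod_eq_0_iff_dvd)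
qed simp

section \<open>The nonabelian tensor square\<close>

definition tensor :: "('a, 'b) monoid_scheme \<Rightarrow> 'a \<Rightarrow> 'a \<Rightarrow> ('a \<times> 'a) word set" where
  "tensor G g h = pres_gen (tensor_relators G) (g, h)"

definition tensor_lift :: "('a, 'b) monoid_scheme \<Rightarrow> ('c, 'd) monoid_scheme \<Rightarrow> ('a \<Rightarrow> 'a \<Rightarrow> 'c)
   \<Rightarrow> ('a \<times> 'a) word set \<Rightarrow> 'c" where
  "tensor_lift G H f = presented_lift H
     (\<lambda>p. if fst p \<in> carrier G \<and> snd p \<in> carrier G then f (fst p) (snd p) else \<one>\<^bsub>H\<^esub>)"

definition tensor_act :: "('a, 'b) monoid_scheme \<Rightarrow> 'a \<Rightarrow> ('a \<times> 'a) word set \<Rightarrow> ('a \<times> 'a) word set"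
  where "tensor_act G x = tensor_lift G (tensor_square G) (\<lambda>g h. tensor G (gconj G x g) (gconj G x h))"

definition commutator_map :: "('a, 'b) monoid_scheme \<Rightarrow> ('a \<times> 'a) word set \<Rightarrow> 'a" where
  "commutator_map G = tensor_lift G G (commutator G)"

lemma (in group) eq_mult_if_mult_inv_inv_eq_one:
  assumes "a \<in> carrier G" "b \<in> carrier G" "c \<in> carrier G" "a \<otimes> (inv b \<otimes> inv c) = \<one>"
  shows "a = c \<otimes> b"
proof -
  have "inv (inv b \<otimes> inv c) = a"
    using assms by (intro inv_equality) auto
  then show ?thesis using assms by (simp add: inv_mult_group)
qed

locale nonabelian_tensor_square = group G for G (structure)
begin

abbreviation T where "T \<equiv> tensor_square G"

lemma tensor_square_unfold:
  "T = presented_group (Sigma (carrier G) (\<lambda>_. carrier G)) (tensor_relators G)"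
  by (simp add: tensor_square_def)

sublocale T: group T
  unfolding tensor_square_unfold by (rule group_presented_group)

lemma tensor_closed[simp]: "g \<in> carrier G \<Longrightarrow> h \<in> carrier G \<Longrightarrow> tensor G g h \<in> carrier T"
  unfolding tensor_def tensor_square_unfold by (rule pres_gen_closed) simp

lemma inv_tensor:
  "g \<in> carrier G \<Longrightarrow> h \<in> carrier G \<Longrightarrow>
   inv\<^bsub>T\<^esub> tensor G g h = pres_class (tensor_relators G) [((g, h), False)]"
  unfolding tensor_def tensor_square_unfold by (rule inv_pres_gen) simp

lemma tensor_square_mult:
  "pres_class (tensor_relators G) u \<otimes>\<^bsub>T\<^esub> pres_class (tensor_relators G) v
   = pres_class (tensor_relators G) (u @ v)"
  unfolding tensor_square_unfold by (rule presented_group_mult)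

lemma tensor_mult_left:
  assumes "g \<in> carrier G" "g' \<in> carrier G" "h \<in> carrier G"
  shows "tensor G (g \<otimes> g') h = tensor G (gconj G g g') (gconj G g h) \<otimes>\<^bsub>T\<^esub> tensor G g h"
proof (rule T.eq_mult_if_mult_inv_inv_eq_one)
  let ?r = "[((g \<otimes> g', h), True), ((g, h), False), ((gconj G g g', gconj G g h), False)]"
  have "?r \<in> tensor_relators G" using assms unfolding tensor_relators_def by blast
  then have "pres_class (tensor_relators G) ?r = \<one>\<^bsub>T\<^esub>"
    unfolding tensor_square_unfold by (rule pres_class_relator)
  moreover have "tensor G (g \<otimes> g') h \<otimes>\<^bsub>T\<^esub>
      (inv\<^bsub>T\<^esub> tensor G g h \<otimes>\<^bsub>T\<^esub> inv\<^bsub>T\<^esub> tensor G (gconj G g g') (gconj G g h))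
      = pres_class (tensor_relators G) ?r"
    using assms by (simp only: inv_tensor gconj_closed m_closed)
      (simp add: tensor_def pres_gen_def tensor_square_mult)
  ultimately show "tensor G (g \<otimes> g') h \<otimes>\<^bsub>T\<^esub>
      (inv\<^bsub>T\<^esub> tensor G g h \<otimes>\<^bsub>T\<^esub> inv\<^bsub>T\<^esub> tensor G (gconj G g g') (gconj G g h)) = \<one>\<^bsub>T\<^esub>"
    by simp
qed (use assms in auto)

lemma tensor_mult_right:
  assumes "g \<in> carrier G" "h \<in> carrier G" "h' \<in> carrier G"
  shows "tensor G g (h \<otimes> h') = tensor G g h \<otimes>\<^bsub>T\<^esub> tensor G (gconj G h g) (gconj G h h')"
proof (rule T.eq_mult_if_mult_inv_inv_eq_one)
  let ?r = "[((g, h \<otimes> h'), True), ((gconj G h g, gconj G h h'), False), ((g, h), False)]"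
  have "?r \<in> tensor_relators G" using assms unfolding tensor_relators_def by blast
  then have "pres_class (tensor_relators G) ?r = \<one>\<^bsub>T\<^esub>"
    unfolding tensor_square_unfold by (rule pres_class_relator)
  moreover have "tensor G g (h \<otimes> h') \<otimes>\<^bsub>T\<^esub>
      (inv\<^bsub>T\<^esub> tensor G (gconj G h g) (gconj G h h') \<otimes>\<^bsub>T\<^esub> inv\<^bsub>T\<^esub> tensor G g h)
      = pres_class (tensor_relators G) ?r"
    using assms by (simp only: inv_tensor gconj_closed m_closed)
      (simp add: tensor_def pres_gen_def tensor_square_mult)
  ultimately show "tensor G g (h \<otimes> h') \<otimes>\<^bsub>T\<^esub>
      (inv\<^bsub>T\<^esub> tensor G (gconj G h g) (gconj G h h') \<otimes>\<^bsub>T\<^esub> inv\<^bsub>T\<^esub> tensor G g h) = \<one>\<^bsub>T\<^esub>"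
    by simp
qed (use assms in auto)

lemma tensor_square_induct[consumes 1, case_names one tensor inv_tensor mult]:
  assumes "A \<in> carrier T" "P \<one>\<^bsub>T\<^esub>"
    "\<And>g h. g \<in> carrier G \<Longrightarrow> h \<in> carrier G \<Longrightarrow> P (tensor G g h)"
    "\<And>g h. g \<in> carrier G \<Longrightarrow> h \<in> carrier G \<Longrightarrow> P (inv\<^bsub>T\<^esub> tensor G g h)"
    "\<And>a b. a \<in> carrier T \<Longrightarrow> b \<in> carrier T \<Longrightarrow> P a \<Longrightarrow> P b \<Longrightarrow> P (a \<otimes>\<^bsub>T\<^esub> b)"
  shows "P A"
  using assms(1) unfolding tensor_square_unfold
  by (induction rule: presented_group_induct)
    (use assms(2-5) in \<open>auto simp: tensor_def tensor_square_unfold\<close>)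

lemma tensor_square_hom_eqI:
  assumes "group H" "f1 \<in> hom T H" "f2 \<in> hom T H"
    and "\<And>g h. g \<in> carrier G \<Longrightarrow> h \<in> carrier G \<Longrightarrow> f1 (tensor G g h) = f2 (tensor G g h)"
    and "A \<in> carrier T"
  shows "f1 A = f2 A"
  using assms(5)
proof (induction rule: tensor_square_induct)
  case one then show ?case using assms(1,2,3) T.group_axioms by (simp add: hom_one)
next
  case (tensor g h) then show ?case by (rule assms(4))
next
  case (inv_tensor g h)
  then show ?case using assms(1-4) T.group_axioms by (simp add: hom_inv_group)
next
  case (mult a b) then show ?case using assms(2,3) by (simp add: hom_mult)
qed

lemma tensor_lift:
  assumes "group H"
    and f_closed: "\<And>g h. g \<in> carrier G \<Longrightarrow> h \<in> carrier G \<Longrightarrow> f g h \<in> carrier H"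
    and f_mult_left: "\<And>g g' h. g \<in> carrier G \<Longrightarrow> g' \<in> carrier G \<Longrightarrow> h \<in> carrier G \<Longrightarrow>
       f (g \<otimes> g') h = f (gconj G g g') (gconj G g h) \<otimes>\<^bsub>H\<^esub> f g h"
    and f_mult_right: "\<And>g h h'. g \<in> carrier G \<Longrightarrow> h \<in> carrier G \<Longrightarrow> h' \<in> carrier G \<Longrightarrow>
       f g (h \<otimes> h') = f g h \<otimes>\<^bsub>H\<^esub> f (gconj G h g) (gconj G h h')"
  shows tensor_lift_hom: "tensor_lift G H f \<in> hom T H"
    and tensor_lift_tensor:
      "g \<in> carrier G \<Longrightarrow> h \<in> carrier G \<Longrightarrow> tensor_lift G H f (tensor G g h) = f g h"
proof -
  interpret H: group H by fact
  let ?F = "\<lambda>p. if fst p \<in> carrier G \<and> snd p \<in> carrier G then f (fst p) (snd p) else \<one>\<^bsub>H\<^esub>"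
  have F: "\<And>x. ?F x \<in> carrier H" using f_closed by auto
  have relators: "eval_word H ?F r = \<one>\<^bsub>H\<^esub>" if "r \<in> tensor_relators G" for r
    using that unfolding tensor_relators_def
    by (auto simp: f_mult_left f_mult_right f_closed H.m_assoc)
  show "tensor_lift G H f \<in> hom T H"
    unfolding tensor_lift_def tensor_square_unfold by (rule presented_lift_hom[OF assms(1) F relators])
  show "g \<in> carrier G \<Longrightarrow> h \<in> carrier G \<Longrightarrow> tensor_lift G H f (tensor G g h) = f g h"
    unfolding tensor_lift_def tensor_def by (subst presented_lift_gen[OF assms(1) F relators]) auto
qed

lemma
  assumes x: "x \<in> carrier G"
  shows tensor_act_hom: "tensor_act G x \<in> hom T T"
    and tensor_act_tensor: "g \<in> carrier G \<Longrightarrow> h \<in> carrier G \<Longrightarrow>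
      tensor_act G x (tensor G g h) = tensor G (gconj G x g) (gconj G x h)"
  unfolding tensor_act_def
  by (rule tensor_lift[OF T.group_axioms], simp add: x,
      simp add: x gconj_mult gconj_gconj[symmetric] tensor_mult_left,
      simp add: x gconj_mult gconj_gconj[symmetric] tensor_mult_right)+

lemma tensor_act_closed[simp]: "x \<in> carrier G \<Longrightarrow> t \<in> carrier T \<Longrightarrow> tensor_act G x t \<in> carrier T"
  by (rule hom_in_carrier[OF tensor_act_hom])

lemma tensor_act_mult:
  "x \<in> carrier G \<Longrightarrow> t \<in> carrier T \<Longrightarrow> s \<in> carrier T \<Longrightarrow>
   tensor_act G x (t \<otimes>\<^bsub>T\<^esub> s) = tensor_act G x t \<otimes>\<^bsub>T\<^esub> tensor_act G x s"
  by (rule hom_mult[OF tensor_act_hom])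

lemma tensor_act_inv:
  "x \<in> carrier G \<Longrightarrow> t \<in> carrier T \<Longrightarrow> tensor_act G x (inv\<^bsub>T\<^esub> t) = inv\<^bsub>T\<^esub> tensor_act G x t"
  by (rule hom_inv_group[OF tensor_act_hom _ T.group_axioms T.group_axioms])

lemma tensor_act_act:
  assumes "x \<in> carrier G" "y \<in> carrier G" "t \<in> carrier T"
  shows "tensor_act G x (tensor_act G y t) = tensor_act G (x \<otimes> y) t"
proof -
  have "(\<lambda>t. tensor_act G x (tensor_act G y t)) \<in> hom T T"
    using assms by (intro homI) (simp_all add: tensor_act_mult)
  from tensor_square_hom_eqI[OF T.group_axioms this tensor_act_hom _ assms(3)] show ?thesis
    using assms by (simp add: tensor_act_tensor gconj_gconj_mult)
qed

lemma tensor_act_one[simp]: "x \<in> carrier G \<Longrightarrow> tensor_act G x \<one>\<^bsub>T\<^esub> = \<one>\<^bsub>T\<^esub>"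
  by (rule hom_one[OF tensor_act_hom T.group_axioms T.group_axioms])

lemma tensor_act_by_one:
  assumes "t \<in> carrier T"
  shows "tensor_act G \<one> t = t"
proof -
  have "(\<lambda>t. t) \<in> hom T T" by (rule homI) auto
  from tensor_square_hom_eqI[OF T.group_axioms tensor_act_hom this _ assms] show ?thesis
    by (simp add: tensor_act_tensor)
qed

lemma tensor_mult_left_act:
  "g \<in> carrier G \<Longrightarrow> g' \<in> carrier G \<Longrightarrow> h \<in> carrier G \<Longrightarrow>
   tensor G (g \<otimes> g') h = tensor_act G g (tensor G g' h) \<otimes>\<^bsub>T\<^esub> tensor G g h"
  by (simp add: tensor_mult_left tensor_act_tensor)

lemma tensor_mult_right_act:
  "g \<in> carrier G \<Longrightarrow> h \<in> carrier G \<Longrightarrow> h' \<in> carrier G \<Longrightarrow>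
   tensor G g (h \<otimes> h') = tensor G g h \<otimes>\<^bsub>T\<^esub> tensor_act G h (tensor G g h')"
  by (simp add: tensor_mult_right tensor_act_tensor)

lemma tensor_one_left[simp]: "h \<in> carrier G \<Longrightarrow> tensor G \<one> h = \<one>\<^bsub>T\<^esub>"
  using tensor_mult_left_act[of \<one> \<one> h] by (simp add: tensor_act_by_one)

lemma tensor_one_right[simp]: "g \<in> carrier G \<Longrightarrow> tensor G g \<one> = \<one>\<^bsub>T\<^esub>"
  using tensor_mult_right_act[of g \<one> \<one>] by (simp add: tensor_act_by_one)

lemma
  shows commutator_map_hom: "commutator_map G \<in> hom T G"
    and commutator_map_tensor:
      "g \<in> carrier G \<Longrightarrow> h \<in> carrier G \<Longrightarrow> commutator_map G (tensor G g h) = commutator G g h"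
  unfolding commutator_map_def
  by (rule tensor_lift[OF group_axioms], simp,
      simp add: commutator_def gconj_def m_assoc inv_mult_group,
      simp add: commutator_def gconj_def m_assoc inv_mult_group)+

lemma commutator_map_closed[simp]: "t \<in> carrier T \<Longrightarrow> commutator_map G t \<in> carrier G"
  by (rule hom_in_carrier[OF commutator_map_hom])

lemma commutator_map_one: "commutator_map G \<one>\<^bsub>T\<^esub> = \<one>"
  by (rule hom_one[OF commutator_map_hom T.group_axioms group_axioms])

lemma commutator_map_mult:
  "a \<in> carrier T \<Longrightarrow> b \<in> carrier T \<Longrightarrow>
   commutator_map G (a \<otimes>\<^bsub>T\<^esub> b) = commutator_map G a \<otimes> commutator_map G b"
  by (rule hom_mult[OF commutator_map_hom])

lemma commutator_map_inv:
  "a \<in> carrier T \<Longrightarrow> commutator_map G (inv\<^bsub>T\<^esub> a) = inv (commutator_map G a)"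
  by (rule hom_inv_group[OF commutator_map_hom _ T.group_axioms group_axioms])

text \<open>Expanding \<open>(g g') \<otimes> (h h')\<close> first on the left and then on the right, or the other
  way round, and comparing the results.\<close>

lemma tensor_act_tensor_commute:
  assumes "g \<in> carrier G" "h \<in> carrier G" "g' \<in> carrier G" "h' \<in> carrier G"
  shows "tensor_act G g (tensor_act G h (tensor G g' h')) \<otimes>\<^bsub>T\<^esub> tensor G g h
       = tensor G g h \<otimes>\<^bsub>T\<^esub> tensor_act G h (tensor_act G g (tensor G g' h'))"
proof -
  define A where "A = tensor_act G g (tensor G g' h)"
  define B where "B = tensor_act G g (tensor_act G h (tensor G g' h'))"
  define C where "C = tensor G g h"
  define D where "D = tensor_act G h (tensor G g h')"
  define B' where "B' = tensor_act G h (tensor_act G g (tensor G g' h'))"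
  have c: "A \<in> carrier T" "B \<in> carrier T" "C \<in> carrier T" "D \<in> carrier T" "B' \<in> carrier T"
    using assms by (simp_all add: A_def B_def C_def D_def B'_def)
  have "tensor G (g \<otimes> g') (h \<otimes> h') = tensor_act G g (tensor G g' (h \<otimes> h')) \<otimes>\<^bsub>T\<^esub> tensor G g (h \<otimes> h')"
    using assms by (intro tensor_mult_left_act) auto
  also have "\<dots> = A \<otimes>\<^bsub>T\<^esub> B \<otimes>\<^bsub>T\<^esub> (C \<otimes>\<^bsub>T\<^esub> D)"
    using assms by (simp add: tensor_mult_right_act tensor_act_mult A_def B_def C_def D_def)
  moreover have "tensor G (g \<otimes> g') (h \<otimes> h') = tensor G (g \<otimes> g') h \<otimes>\<^bsub>T\<^esub> tensor_act G h (tensor G (g \<otimes> g') h')"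
    using assms by (intro tensor_mult_right_act) auto
  moreover have "\<dots> = A \<otimes>\<^bsub>T\<^esub> C \<otimes>\<^bsub>T\<^esub> (B' \<otimes>\<^bsub>T\<^esub> D)"
    using assms by (simp add: tensor_mult_left_act tensor_act_mult A_def B'_def C_def D_def)
  ultimately have "A \<otimes>\<^bsub>T\<^esub> (B \<otimes>\<^bsub>T\<^esub> C \<otimes>\<^bsub>T\<^esub> D) = A \<otimes>\<^bsub>T\<^esub> (C \<otimes>\<^bsub>T\<^esub> B' \<otimes>\<^bsub>T\<^esub> D)"
    using c by (simp add: T.m_assoc)
  then have "B \<otimes>\<^bsub>T\<^esub> C \<otimes>\<^bsub>T\<^esub> D = C \<otimes>\<^bsub>T\<^esub> B' \<otimes>\<^bsub>T\<^esub> D"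
    using c by simp
  then show ?thesis using c by (simp add: B_def C_def B'_def)
qed

lemma conj_tensor_tensor:
  assumes "g \<in> carrier G" "h \<in> carrier G" "a \<in> carrier G" "b \<in> carrier G"
  shows "tensor G g h \<otimes>\<^bsub>T\<^esub> tensor G a b \<otimes>\<^bsub>T\<^esub> inv\<^bsub>T\<^esub> tensor G g h
       = tensor_act G (commutator G g h) (tensor G a b)"
proof -
  define y where "y = inv (h \<otimes> g)"
  have y: "y \<in> carrier G" using assms by (simp add: y_def)
  have "tensor_act G g (tensor_act G h (tensor G (gconj G y a) (gconj G y b))) \<otimes>\<^bsub>T\<^esub> tensor G g h
      = tensor G g h \<otimes>\<^bsub>T\<^esub> tensor_act G h (tensor_act G g (tensor G (gconj G y a) (gconj G y b)))"
    using assms y by (intro tensor_act_tensor_commute) auto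
  moreover have "tensor_act G h (tensor_act G g (tensor G (gconj G y a) (gconj G y b))) = tensor G a b"
  proof -
    have "tensor_act G h (tensor_act G g (tensor G (gconj G y a) (gconj G y b)))
        = tensor_act G (h \<otimes> g \<otimes> y) (tensor G a b)"
      using assms y by (simp add: tensor_act_tensor[symmetric] tensor_act_act m_assoc)
    also have "h \<otimes> g \<otimes> y = \<one>" using assms by (simp add: y_def)
    finally show ?thesis using assms by (simp add: tensor_act_by_one)
  qed
  moreover have "tensor_act G g (tensor_act G h (tensor G (gconj G y a) (gconj G y b)))
      = tensor_act G (commutator G g h) (tensor G a b)"
    using assms y
    by (simp add: tensor_act_act tensor_act_tensor gconj_gconj_mult y_def commutator_def
        m_assoc inv_mult_group)
  ultimately show ?thesis using assms
    by (subst T.inv_solve_right') auto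
qed

lemma conj_tensor:
  assumes "g \<in> carrier G" "h \<in> carrier G" "s \<in> carrier T"
  shows "tensor G g h \<otimes>\<^bsub>T\<^esub> s \<otimes>\<^bsub>T\<^esub> inv\<^bsub>T\<^esub> tensor G g h = tensor_act G (commutator G g h) s"
proof -
  have "(\<lambda>s. tensor G g h \<otimes>\<^bsub>T\<^esub> s \<otimes>\<^bsub>T\<^esub> inv\<^bsub>T\<^esub> tensor G g h) \<in> hom T T"
    using assms by (intro T.conj_hom) simp
  from tensor_square_hom_eqI[OF T.group_axioms this tensor_act_hom _ assms(3)] show ?thesis
    using assms by (simp add: conj_tensor_tensor)
qed

lemma conj_eq_tensor_act:
  assumes "t \<in> carrier T" "s \<in> carrier T"
  shows "t \<otimes>\<^bsub>T\<^esub> s \<otimes>\<^bsub>T\<^esub> inv\<^bsub>T\<^esub> t = tensor_act G (commutator_map G t) s"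
  using assms
proof (induction t arbitrary: s rule: tensor_square_induct)
  case one then show ?case by (simp add: commutator_map_one tensor_act_by_one)
next
  case (tensor g h) then show ?case by (simp add: conj_tensor commutator_map_tensor)
next
  case (inv_tensor g h)
  define k where "k = commutator G g h"
  have k: "k \<in> carrier G" using inv_tensor by (simp add: k_def)
  define s' where "s' = tensor_act G (inv k) s"
  have s': "s' \<in> carrier T" using k inv_tensor by (simp add: s'_def)
  have "tensor G g h \<otimes>\<^bsub>T\<^esub> s' \<otimes>\<^bsub>T\<^esub> inv\<^bsub>T\<^esub> tensor G g h = s"
    using inv_tensor k s' by (simp add: conj_tensor k_def[symmetric] s'_def tensor_act_act tensor_act_by_one)
  then have "inv\<^bsub>T\<^esub> tensor G g h \<otimes>\<^bsub>T\<^esub> s \<otimes>\<^bsub>T\<^esub> tensor G g h = s'"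
    using inv_tensor s' by (auto simp: T.m_assoc)
  then show ?case
    using inv_tensor by (simp add: commutator_map_inv commutator_map_tensor k_def s'_def)
next
  case (mult a b)
  have "a \<otimes>\<^bsub>T\<^esub> b \<otimes>\<^bsub>T\<^esub> s \<otimes>\<^bsub>T\<^esub> inv\<^bsub>T\<^esub> (a \<otimes>\<^bsub>T\<^esub> b)
      = a \<otimes>\<^bsub>T\<^esub> (b \<otimes>\<^bsub>T\<^esub> s \<otimes>\<^bsub>T\<^esub> inv\<^bsub>T\<^esub> b) \<otimes>\<^bsub>T\<^esub> inv\<^bsub>T\<^esub> a"
    using mult(1,2,5) by (simp add: T.m_assoc T.inv_mult_group)
  also have "\<dots> = tensor_act G (commutator_map G a) (tensor_act G (commutator_map G b) s)"
    using mult by simp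
  finally show ?case using mult by (simp add: tensor_act_act commutator_map_mult)
qed

lemma tensor_act_tensor_eq:
  assumes "a \<in> carrier G" "b \<in> carrier G" "c \<in> carrier G"
  shows "tensor_act G a (tensor G b c)
       = tensor G a (gconj G b c) \<otimes>\<^bsub>T\<^esub> tensor G b c \<otimes>\<^bsub>T\<^esub> inv\<^bsub>T\<^esub> tensor G a c"
proof -
  have "a \<otimes> b = b \<otimes> (inv b \<otimes> a \<otimes> b)" using assms by (simp add: m_assoc)
  moreover have "gconj G b (inv b \<otimes> a \<otimes> b) = a" using assms by (simp add: gconj_def m_assoc)
  ultimately have "tensor G (a \<otimes> b) c = tensor G a (gconj G b c) \<otimes>\<^bsub>T\<^esub> tensor G b c"
    using assms tensor_mult_left_act[of b "inv b \<otimes> a \<otimes> b" c] by (simp add: tensor_act_tensor)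
  then have "tensor_act G a (tensor G b c) \<otimes>\<^bsub>T\<^esub> tensor G a c = tensor G a (gconj G b c) \<otimes>\<^bsub>T\<^esub> tensor G b c"
    using assms by (simp add: tensor_mult_left_act)
  then show ?thesis using assms by (simp add: T.inv_solve_right)
qed

lemma tensor_act_tensor_commutator:
  assumes "x \<in> carrier G" "n \<in> carrier G" "g \<in> carrier G"
  shows "tensor_act G x (tensor G n g) = tensor G x (commutator G n g) \<otimes>\<^bsub>T\<^esub> tensor G n g"
proof -
  have "tensor_act G x (tensor G n g)
      = tensor G x (commutator G n g \<otimes> g) \<otimes>\<^bsub>T\<^esub> tensor G n g \<otimes>\<^bsub>T\<^esub> inv\<^bsub>T\<^esub> tensor G x g"
    using assms by (simp add: tensor_act_tensor_eq gconj_eq_commutator_mult)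
  also have "tensor G x (commutator G n g \<otimes> g)
      = tensor G x (commutator G n g) \<otimes>\<^bsub>T\<^esub> tensor_act G (commutator G n g) (tensor G x g)"
    using assms by (intro tensor_mult_right_act) auto
  also have "tensor_act G (commutator G n g) (tensor G x g)
      = tensor G n g \<otimes>\<^bsub>T\<^esub> tensor G x g \<otimes>\<^bsub>T\<^esub> inv\<^bsub>T\<^esub> tensor G n g"
    using assms by (simp add: conj_tensor)
  finally show ?thesis using assms by (simp add: T.m_assoc)
qed

end

definition tensor_gens :: "('a, 'b) monoid_scheme \<Rightarrow> 'a set \<Rightarrow> ('a \<times> 'a) word set set" where
  "tensor_gens G N =
     {tensor G n g | n g. n \<in> N \<and> g \<in> carrier G} \<union> {tensor G g n | g n. g \<in> carrier G \<and> n \<in> N}"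

text \<open>For normal \<open>N\<close>, the image of \<open>N \<otimes> G\<close> and \<open>G \<otimes> N\<close> in \<open>G \<otimes> G\<close>.\<close>

definition tensor_subgroup :: "('a, 'b) monoid_scheme \<Rightarrow> 'a set \<Rightarrow> ('a \<times> 'a) word set set" where
  "tensor_subgroup G N = generate (tensor_square G) (tensor_gens G N)"

lemma tensor_gensE:
  assumes "t \<in> tensor_gens G N"
  obtains (left) n g where "t = tensor G n g" "n \<in> N" "g \<in> carrier G"
    | (right) g n where "t = tensor G g n" "g \<in> carrier G" "n \<in> N"
  using assms unfolding tensor_gens_def by blast

context nonabelian_tensor_square
begin

lemma tensor_gens_subset: "N \<subseteq> carrier G \<Longrightarrow> tensor_gens G N \<subseteq> carrier T"
  unfolding tensor_gens_def by auto

lemma tensor_subgroup_subset: "N \<subseteq> carrier G \<Longrightarrow> tensor_subgroup G N \<subseteq> carrier T"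
  unfolding tensor_subgroup_def by (rule T.generate_incl[OF tensor_gens_subset])

lemma tensor_in_tensor_subgroup:
  "n \<in> N \<Longrightarrow> g \<in> carrier G \<Longrightarrow> tensor G n g \<in> tensor_subgroup G N"
  "n \<in> N \<Longrightarrow> g \<in> carrier G \<Longrightarrow> tensor G g n \<in> tensor_subgroup G N"
  by (auto simp: tensor_subgroup_def tensor_gens_def intro!: generate.incl)

lemma commutator_map_tensor_subgroup:
  assumes N: "N \<lhd> G" and t: "t \<in> tensor_subgroup G N"
  shows "commutator_map G t \<in> N"
proof -
  interpret N: normal N G by fact
  have gens: "commutator_map G h \<in> N" if "h \<in> tensor_gens G N" for h
    using that N.subset
    by (cases rule: tensor_gensE) (auto simp: commutator_map_tensor commutator_mem_normal[OF N])
  from t show ?thesis unfolding tensor_subgroup_def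
  proof (induction rule: generate.induct)
    case one then show ?case by (simp add: commutator_map_one)
  next
    case (incl h) then show ?case by (rule gens)
  next
    case (inv h)
    then show ?case using gens tensor_gens_subset[OF N.subset] by (auto simp: commutator_map_inv)
  next
    case (eng a b)
    then show ?case
      using T.generate_in_carrier[OF tensor_gens_subset[OF N.subset]] by (simp add: commutator_map_mult)
  qed
qed

lemma tensor_subgroup_normal:
  assumes M: "M \<lhd> G"
  shows "tensor_subgroup G M \<lhd> T"
  unfolding tensor_subgroup_def
proof (rule T.normal_generateI)
  interpret M: normal M G by fact
  show "tensor_gens G M \<subseteq> carrier T" by (rule tensor_gens_subset[OF M.subset])
  fix h t assume h: "h \<in> tensor_gens G M" and t: "t \<in> carrier T"
  define x where "x = commutator_map G t"
  have x: "x \<in> carrier G" using t by (simp add: x_def)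
  have "t \<otimes>\<^bsub>T\<^esub> h \<otimes>\<^bsub>T\<^esub> inv\<^bsub>T\<^esub> t = tensor_act G x h"
    using conj_eq_tensor_act t h tensor_gens_subset[OF M.subset] x_def by blast
  also have "tensor_act G x h \<in> tensor_gens G M"
    using h
  proof (cases rule: tensor_gensE)
    case (left n g)
    then have "tensor_act G x h = tensor G (gconj G x n) (gconj G x g)"
      using x M.subset by (simp add: tensor_act_tensor subsetD)
    moreover have "gconj G x n \<in> M" using left x unfolding gconj_def by (simp add: M.inv_op_closed2)
    moreover have "gconj G x g \<in> carrier G" using left x by simp
    ultimately show ?thesis unfolding tensor_gens_def by blast
  next
    case (right g n)
    then have "tensor_act G x h = tensor G (gconj G x g) (gconj G x n)"
      using x M.subset by (simp add: tensor_act_tensor subsetD)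
    moreover have "gconj G x n \<in> M" using right x unfolding gconj_def by (simp add: M.inv_op_closed2)
    moreover have "gconj G x g \<in> carrier G" using right x by simp
    ultimately show ?thesis unfolding tensor_gens_def by blast
  qed
  finally show "t \<otimes>\<^bsub>T\<^esub> h \<otimes>\<^bsub>T\<^esub> inv\<^bsub>T\<^esub> t \<in> tensor_gens G M" .
qed

lemma tensor_subgroup_carrier: "tensor_subgroup G (carrier G) = carrier T"
proof
  show "tensor_subgroup G (carrier G) \<subseteq> carrier T" by (rule tensor_subgroup_subset) simp
  show "carrier T \<subseteq> tensor_subgroup G (carrier G)"
  proof
    fix t assume "t \<in> carrier T"
    then show "t \<in> tensor_subgroup G (carrier G)" unfolding tensor_subgroup_def
    proof (induction rule: tensor_square_induct)
      case one then show ?case by (rule generate.one)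
    next
      case (tensor g h) then show ?case by (intro generate.incl) (auto simp: tensor_gens_def)
    next
      case (inv_tensor g h) then show ?case by (intro generate.inv) (auto simp: tensor_gens_def)
    next
      case (mult a b) show ?case using mult(3,4) by (rule generate.eng)
    qed
  qed
qed

lemma tensor_subgroup_trivial: "t \<in> tensor_subgroup G {\<one>} \<Longrightarrow> t = \<one>\<^bsub>T\<^esub>"
  unfolding tensor_subgroup_def
  by (induction rule: generate.induct) (auto simp: tensor_gens_def)

end

section \<open>One step down a normal series\<close>

text \<open>Modulo \<open>tensor_subgroup G M\<close>, tensors of two elements of \<open>N\<close> become central, bilinear
  and of order dividing \<open>e\<close>; this controls the powers of the elements of \<open>tensor_subgroup G N\<close>.\<close>

locale tensor_subgroup_step = nonabelian_tensor_square +
  fixes N M :: "'a set" and e :: nat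
  assumes N_normal: "N \<lhd> G" and M_normal: "M \<lhd> G"
    and commutator_in_M: "\<And>x y. x \<in> N \<Longrightarrow> y \<in> N \<Longrightarrow> commutator G x y \<in> M"
    and pow_e: "\<And>x. x \<in> carrier G \<Longrightarrow> x [^] e = \<one>"
begin

sublocale N: normal N G by (rule N_normal)
sublocale M: normal M G by (rule M_normal)

lemma N_pow_closed[simp]: "x \<in> N \<Longrightarrow> x [^] (k::nat) \<in> N"
  by (induction k) simp_all

abbreviation L where "L \<equiv> tensor_subgroup G M"

definition Q where "Q = T Mod L"

definition proj where "proj t = L #>\<^bsub>T\<^esub> t"

lemma L_normal: "L \<lhd> T" by (rule tensor_subgroup_normal[OF M_normal])

sublocale Q: group Q unfolding Q_def by (rule normal.factorgroup_is_group[OF L_normal])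

lemma proj_hom: "proj \<in> hom T Q"
  unfolding proj_def Q_def using normal.r_coset_hom_Mod[OF L_normal] by simp

lemma proj_closed[simp]: "t \<in> carrier T \<Longrightarrow> proj t \<in> carrier Q"
  by (rule hom_in_carrier[OF proj_hom])

lemma proj_mult: "a \<in> carrier T \<Longrightarrow> b \<in> carrier T \<Longrightarrow> proj (a \<otimes>\<^bsub>T\<^esub> b) = proj a \<otimes>\<^bsub>Q\<^esub> proj b"
  by (rule hom_mult[OF proj_hom])

lemma proj_inv: "a \<in> carrier T \<Longrightarrow> proj (inv\<^bsub>T\<^esub> a) = inv\<^bsub>Q\<^esub> proj a"
  by (rule hom_inv_group[OF proj_hom _ T.group_axioms Q.group_axioms])

lemma proj_one[simp]: "proj \<one>\<^bsub>T\<^esub> = \<one>\<^bsub>Q\<^esub>"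
  by (rule hom_one[OF proj_hom T.group_axioms Q.group_axioms])

lemma proj_pow: "a \<in> carrier T \<Longrightarrow> proj (a [^]\<^bsub>T\<^esub> (n::nat)) = proj a [^]\<^bsub>Q\<^esub> n"
  by (rule hom_nat_pow[OF proj_hom _ T.group_axioms Q.group_axioms])

lemma proj_eq_one_iff: "t \<in> carrier T \<Longrightarrow> proj t = \<one>\<^bsub>Q\<^esub> \<longleftrightarrow> t \<in> L"
  using T.coset_join1[OF _ _ normal_imp_subgroup[OF L_normal]]
    T.coset_join2[OF _ normal_imp_subgroup[OF L_normal]]
  unfolding proj_def Q_def by auto

lemma carrier_Q_proj: "q \<in> carrier Q \<Longrightarrow> \<exists>t\<in>carrier T. q = proj t"
  unfolding proj_def Q_def carrier_FactGroup by blast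

lemma proj_tensor_M:
  "m \<in> M \<Longrightarrow> g \<in> carrier G \<Longrightarrow> proj (tensor G m g) = \<one>\<^bsub>Q\<^esub>"
  "m \<in> M \<Longrightarrow> g \<in> carrier G \<Longrightarrow> proj (tensor G g m) = \<one>\<^bsub>Q\<^esub>"
  by (simp_all add: proj_eq_one_iff tensor_in_tensor_subgroup)

lemma proj_tensor_act_M:
  assumes "m \<in> M" "s \<in> carrier T"
  shows "proj (tensor_act G m s) = proj s"
proof -
  have "(\<lambda>s. proj (tensor_act G m s)) \<in> hom T Q"
    using assms by (intro homI) (simp_all add: tensor_act_mult proj_mult)
  from tensor_square_hom_eqI[OF Q.group_axioms this proj_hom _ assms(2)] show ?thesis
    using assms by (simp add: tensor_act_tensor_eq proj_mult proj_inv proj_tensor_M)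
qed

lemma proj_central:
  assumes "t \<in> carrier T" "commutator_map G t \<in> M" "q \<in> carrier Q"
  shows "proj t \<otimes>\<^bsub>Q\<^esub> q = q \<otimes>\<^bsub>Q\<^esub> proj t"
proof -
  obtain s where s: "s \<in> carrier T" "q = proj s" using carrier_Q_proj[OF assms(3)] by blast
  have "proj (t \<otimes>\<^bsub>T\<^esub> s \<otimes>\<^bsub>T\<^esub> inv\<^bsub>T\<^esub> t) = proj s"
    using assms s by (simp add: conj_eq_tensor_act proj_tensor_act_M)
  then have "proj t \<otimes>\<^bsub>Q\<^esub> proj s \<otimes>\<^bsub>Q\<^esub> inv\<^bsub>Q\<^esub> proj t = proj s"
    using assms s by (simp add: proj_mult proj_inv)
  then show ?thesis using assms s by (simp add: Q.inv_solve_right')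
qed

abbreviation qtensor where "qtensor x y \<equiv> proj (tensor G x y)"

lemma qtensor_central:
  "x \<in> N \<Longrightarrow> y \<in> N \<Longrightarrow> q \<in> carrier Q \<Longrightarrow> qtensor x y \<otimes>\<^bsub>Q\<^esub> q = q \<otimes>\<^bsub>Q\<^esub> qtensor x y"
  by (rule proj_central) (simp_all add: commutator_map_tensor commutator_in_M)

lemma proj_act_qtensor:
  assumes "x \<in> N" "y \<in> N" "y' \<in> N"
  shows "proj (tensor_act G y (tensor G x y')) = qtensor x y'"
proof -
  have xy: "commutator G x y' \<in> M" using assms(1,3) by (rule commutator_in_M)
  have "tensor_act G y (tensor G x y')
      = tensor G y (gconj G x y') \<otimes>\<^bsub>T\<^esub> tensor G x y' \<otimes>\<^bsub>T\<^esub> inv\<^bsub>T\<^esub> tensor G y y'"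
    using assms by (intro tensor_act_tensor_eq) auto
  also have "tensor G y (gconj G x y')
      = tensor G y (commutator G x y') \<otimes>\<^bsub>T\<^esub> tensor_act G (commutator G x y') (tensor G y y')"
    using assms by (simp add: gconj_eq_commutator_mult tensor_mult_right_act)
  finally have "proj (tensor_act G y (tensor G x y'))
      = qtensor y y' \<otimes>\<^bsub>Q\<^esub> qtensor x y' \<otimes>\<^bsub>Q\<^esub> inv\<^bsub>Q\<^esub> qtensor y y'"
    using assms xy by (simp add: proj_mult proj_inv proj_tensor_M proj_tensor_act_M)
  also have "\<dots> = qtensor x y'"
    using assms qtensor_central[of y y' "qtensor x y'"] by (simp add: Q.m_assoc)
  finally show ?thesis .
qed

lemma qtensor_mult_right:
  "x \<in> N \<Longrightarrow> y \<in> N \<Longrightarrow> y' \<in> N \<Longrightarrow> qtensor x (y \<otimes> y') = qtensor x y \<otimes>\<^bsub>Q\<^esub> qtensor x y'"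
  by (simp add: tensor_mult_right_act proj_mult proj_act_qtensor)

lemma qtensor_mult_left:
  "x \<in> N \<Longrightarrow> x' \<in> N \<Longrightarrow> y \<in> N \<Longrightarrow> qtensor (x \<otimes> x') y = qtensor x' y \<otimes>\<^bsub>Q\<^esub> qtensor x y"
  by (simp add: tensor_mult_left_act proj_mult proj_act_qtensor)

lemma qtensor_pow_right: "x \<in> N \<Longrightarrow> y \<in> N \<Longrightarrow> qtensor x (y [^] (k::nat)) = qtensor x y [^]\<^bsub>Q\<^esub> k"
  by (induction k) (simp_all add: qtensor_mult_right)

lemma qtensor_pow_left: "x \<in> N \<Longrightarrow> y \<in> N \<Longrightarrow> qtensor (x [^] (k::nat)) y = qtensor x y [^]\<^bsub>Q\<^esub> k"
  by (induction k) (simp_all add: qtensor_mult_left Q.nat_pow_Suc2[symmetric])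

lemma qtensor_central_torsion:
  assumes "x \<in> N" "y \<in> N"
  shows "qtensor x y \<in> central_torsion Q e"
  using assms qtensor_central qtensor_pow_right[OF assms, of e] pow_e[of y]
  by (simp add: central_torsion_def)

lemma proj_act_tensor_left:
  assumes "x \<in> carrier G" "n \<in> carrier G" "g \<in> carrier G"
  shows "proj (tensor_act G x (tensor G n g)) = qtensor x (commutator G n g) \<otimes>\<^bsub>Q\<^esub> qtensor n g"
  using assms by (simp add: tensor_act_tensor_commutator proj_mult)

lemma proj_act_tensor_right:
  assumes "x \<in> N" "n \<in> N" "g \<in> carrier G"
  shows "proj (tensor_act G x (tensor G g n)) = qtensor x (commutator G g n) \<otimes>\<^bsub>Q\<^esub> qtensor g n"
proof -
  have gn: "commutator G g n \<in> N" using commutator_mem_normal[OF N_normal] assms by blast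
  have "proj (tensor_act G x (tensor G g n))
      = qtensor x (commutator G g n) \<otimes>\<^bsub>Q\<^esub> qtensor x n \<otimes>\<^bsub>Q\<^esub> qtensor g n \<otimes>\<^bsub>Q\<^esub> inv\<^bsub>Q\<^esub> qtensor x n"
    using assms gn
    by (simp add: tensor_act_tensor_eq proj_mult proj_inv gconj_eq_commutator_mult qtensor_mult_right)
  also have "\<dots> = qtensor x (commutator G g n) \<otimes>\<^bsub>Q\<^esub> qtensor g n"
    using assms gn qtensor_central[of x n "qtensor g n"] by (simp add: Q.m_assoc)
  finally show ?thesis .
qed

end

context tensor_subgroup_step
begin

text \<open>In the first step of the derived series \<open>[N, G] \<subseteq> M\<close>, so the correction factors below
  are trivial (\<open>k = 1\<close>); in general they have order dividing \<open>e\<close> (\<open>k = e\<close>).\<close>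

context
  fixes k :: nat
  assumes twist: "\<And>x n g. x \<in> N \<Longrightarrow> n \<in> N \<Longrightarrow> g \<in> carrier G \<Longrightarrow>
      qtensor x (commutator G n g) \<in> central_torsion Q k \<and> qtensor x (commutator G g n) \<in> central_torsion Q k"
begin

lemma proj_tensor_act_gens:
  assumes "x \<in> N" "h \<in> tensor_gens G N"
  shows "\<exists>z\<in>central_torsion Q k. proj (tensor_act G x h) = z \<otimes>\<^bsub>Q\<^esub> proj h"
  using assms(2) by (cases rule: tensor_gensE)
    (use assms twist proj_act_tensor_left proj_act_tensor_right in auto)

lemma proj_tensor_act:
  assumes "x \<in> N" "s \<in> tensor_subgroup G N"
  shows "\<exists>z\<in>central_torsion Q k. proj (tensor_act G x s) = z \<otimes>\<^bsub>Q\<^esub> proj s"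
  using assms(2) unfolding tensor_subgroup_def
proof (induction rule: generate.induct)
  case one then show ?case using assms by (intro bexI[of _ "\<one>\<^bsub>Q\<^esub>"] Q.central_torsion_one) simp_all
next
  case (incl h) then show ?case using proj_tensor_act_gens assms(1) by blast
next
  case (inv h)
  obtain z where z: "z \<in> central_torsion Q k" "proj (tensor_act G x h) = z \<otimes>\<^bsub>Q\<^esub> proj h"
    using proj_tensor_act_gens assms(1) inv by blast
  have h: "h \<in> carrier T" using inv tensor_gens_subset[OF N.subset] by blast
  note zc = Q.central_torsion_closed[OF z(1)]
  have "proj (tensor_act G x (inv\<^bsub>T\<^esub> h)) = inv\<^bsub>Q\<^esub> proj h \<otimes>\<^bsub>Q\<^esub> inv\<^bsub>Q\<^esub> z"
    using h assms z zc by (simp add: tensor_act_inv proj_inv Q.inv_mult_group)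
  also have "\<dots> = inv\<^bsub>Q\<^esub> z \<otimes>\<^bsub>Q\<^esub> proj (inv\<^bsub>T\<^esub> h)"
    using Q.central_torsion_commute[OF Q.central_torsion_inv[OF z(1)], of "inv\<^bsub>Q\<^esub> proj h"] h
    by (simp add: proj_inv)
  finally show ?case using Q.central_torsion_inv[OF z(1)] by blast
next
  case (eng h1 h2)
  have h: "h1 \<in> carrier T" "h2 \<in> carrier T"
    using eng(1,2) tensor_subgroup_subset[OF N.subset] unfolding tensor_subgroup_def by auto
  obtain z1 where z1: "z1 \<in> central_torsion Q k" "proj (tensor_act G x h1) = z1 \<otimes>\<^bsub>Q\<^esub> proj h1"
    using eng by blast
  obtain z2 where z2: "z2 \<in> central_torsion Q k" "proj (tensor_act G x h2) = z2 \<otimes>\<^bsub>Q\<^esub> proj h2"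
    using eng by blast
  have zc: "z1 \<in> carrier Q" "z2 \<in> carrier Q" using z1 z2 Q.central_torsion_closed by auto
  have "proj (tensor_act G x (h1 \<otimes>\<^bsub>T\<^esub> h2)) = z1 \<otimes>\<^bsub>Q\<^esub> (proj h1 \<otimes>\<^bsub>Q\<^esub> z2) \<otimes>\<^bsub>Q\<^esub> proj h2"
    using h assms z1 z2 zc by (simp add: tensor_act_mult proj_mult Q.m_assoc)
  also have "proj h1 \<otimes>\<^bsub>Q\<^esub> z2 = z2 \<otimes>\<^bsub>Q\<^esub> proj h1"
    using Q.central_torsion_commute[OF z2(1), of "proj h1"] h by simp
  finally have "proj (tensor_act G x (h1 \<otimes>\<^bsub>T\<^esub> h2)) = (z1 \<otimes>\<^bsub>Q\<^esub> z2) \<otimes>\<^bsub>Q\<^esub> proj (h1 \<otimes>\<^bsub>T\<^esub> h2)"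
    using h zc by (simp add: proj_mult Q.m_assoc)
  then show ?case using Q.central_torsion_mult[OF z1(1) z2(1)] by blast
qed

text \<open>Conjugation by \<open>b\<close> is the action of \<open>commutator_map G b \<in> N\<close>.\<close>

lemma proj_commute_twisted:
  assumes "a \<in> tensor_subgroup G N" "b \<in> tensor_subgroup G N"
  shows "\<exists>z\<in>central_torsion Q k. proj b \<otimes>\<^bsub>Q\<^esub> proj a = z \<otimes>\<^bsub>Q\<^esub> (proj a \<otimes>\<^bsub>Q\<^esub> proj b)"
proof -
  have ab: "a \<in> carrier T" "b \<in> carrier T" using assms tensor_subgroup_subset[OF N.subset] by auto
  obtain z where z: "z \<in> central_torsion Q k"
      "proj (tensor_act G (commutator_map G b) a) = z \<otimes>\<^bsub>Q\<^esub> proj a"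
    using proj_tensor_act[OF commutator_map_tensor_subgroup[OF N_normal assms(2)] assms(1)] by blast
  have zc: "z \<in> carrier Q" using Q.central_torsion_closed[OF z(1)] .
  have "proj (b \<otimes>\<^bsub>T\<^esub> a \<otimes>\<^bsub>T\<^esub> inv\<^bsub>T\<^esub> b) = z \<otimes>\<^bsub>Q\<^esub> proj a"
    using conj_eq_tensor_act[OF ab(2,1)] z(2) by simp
  then have "proj b \<otimes>\<^bsub>Q\<^esub> proj a \<otimes>\<^bsub>Q\<^esub> inv\<^bsub>Q\<^esub> proj b = z \<otimes>\<^bsub>Q\<^esub> proj a"
    using ab by (simp add: proj_mult proj_inv)
  then have "proj b \<otimes>\<^bsub>Q\<^esub> proj a = z \<otimes>\<^bsub>Q\<^esub> proj a \<otimes>\<^bsub>Q\<^esub> proj b"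
    using ab zc by (simp add: Q.inv_solve_right')
  then show ?thesis using z ab zc by (auto simp: Q.m_assoc)
qed

lemma proj_tensor_left_pow:
  assumes "n \<in> N" "g \<in> carrier G" "k dvd (e choose 2) * m"
  shows "qtensor n g [^]\<^bsub>Q\<^esub> (e * m) = \<one>\<^bsub>Q\<^esub>"
proof -
  define z where "z = qtensor n (commutator G n g)"
  have ng: "commutator G n g \<in> N" using commutator_mem_normal[OF N_normal] assms by blast
  have z: "z \<in> central_torsion Q k" using twist assms by (simp add: z_def)
  have "qtensor (n [^] j) g = z [^]\<^bsub>Q\<^esub> (j choose 2) \<otimes>\<^bsub>Q\<^esub> qtensor n g [^]\<^bsub>Q\<^esub> j" for j
  proof (rule Q.twisted_recurrence_left[where x = "\<lambda>j. qtensor (n [^] j) g"])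
    show "qtensor (n [^] Suc j) g = z [^]\<^bsub>Q\<^esub> j \<otimes>\<^bsub>Q\<^esub> qtensor n g \<otimes>\<^bsub>Q\<^esub> qtensor (n [^] j) g" for j
      using assms ng by (simp add: tensor_mult_left_act proj_mult proj_act_tensor_left qtensor_pow_left z_def)
  qed (use assms z Q.central_torsionD in auto)
  from this[of e] have "z [^]\<^bsub>Q\<^esub> (e choose 2) \<otimes>\<^bsub>Q\<^esub> qtensor n g [^]\<^bsub>Q\<^esub> e = \<one>\<^bsub>Q\<^esub>"
    using assms pow_e[of n] by simp
  then show ?thesis using Q.pow_eq_one_of_twisted[OF z _ _ assms(3)] assms by simp
qed

lemma proj_tensor_right_pow:
  assumes "n \<in> N" "g \<in> carrier G" "k dvd (e choose 2) * m"
  shows "qtensor g n [^]\<^bsub>Q\<^esub> (e * m) = \<one>\<^bsub>Q\<^esub>"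
proof -
  define z where "z = qtensor n (commutator G g n)"
  have gn: "commutator G g n \<in> N" using commutator_mem_normal[OF N_normal] assms by blast
  have z: "z \<in> central_torsion Q k" using twist assms by (simp add: z_def)
  have "qtensor g (n [^] j) = z [^]\<^bsub>Q\<^esub> (j choose 2) \<otimes>\<^bsub>Q\<^esub> qtensor g n [^]\<^bsub>Q\<^esub> j" for j
  proof (rule Q.twisted_recurrence_right[where x = "\<lambda>j. qtensor g (n [^] j)"])
    show "qtensor g (n [^] Suc j) = qtensor g (n [^] j) \<otimes>\<^bsub>Q\<^esub> (z [^]\<^bsub>Q\<^esub> j \<otimes>\<^bsub>Q\<^esub> qtensor g n)" for j
      using assms gn by (simp add: tensor_mult_right_act proj_mult proj_act_tensor_right qtensor_pow_left z_def)
  qed (use assms z Q.central_torsionD in auto)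
  from this[of e] have "z [^]\<^bsub>Q\<^esub> (e choose 2) \<otimes>\<^bsub>Q\<^esub> qtensor g n [^]\<^bsub>Q\<^esub> e = \<one>\<^bsub>Q\<^esub>"
    using assms pow_e[of n] by simp
  then show ?thesis using Q.pow_eq_one_of_twisted[OF z _ _ assms(3)] assms by simp
qed

lemma proj_pow_eq_one:
  assumes k: "k dvd (e choose 2) * m" "k dvd (e * m choose 2)" and s: "s \<in> tensor_subgroup G N"
  shows "proj s [^]\<^bsub>Q\<^esub> (e * m) = \<one>\<^bsub>Q\<^esub>"
proof -
  have gens: "proj h [^]\<^bsub>Q\<^esub> (e * m) = \<one>\<^bsub>Q\<^esub>" if "h \<in> tensor_gens G N" for h
    using that by (cases rule: tensor_gensE) (simp_all add: proj_tensor_left_pow proj_tensor_right_pow k)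
  from s show ?thesis unfolding tensor_subgroup_def
  proof (induction rule: generate.induct)
    case (inv h)
    then show ?case
      using gens tensor_gens_subset[OF N.subset] by (auto simp: proj_inv Q.nat_pow_inv)
  next
    case (eng h1 h2)
    have h: "h1 \<in> carrier T" "h2 \<in> carrier T"
      using eng(1,2) tensor_subgroup_subset[OF N.subset] unfolding tensor_subgroup_def by auto
    obtain z where z: "z \<in> central_torsion Q k"
        "proj h2 \<otimes>\<^bsub>Q\<^esub> proj h1 = z \<otimes>\<^bsub>Q\<^esub> (proj h1 \<otimes>\<^bsub>Q\<^esub> proj h2)"
      using proj_commute_twisted eng(1,2) unfolding tensor_subgroup_def by blast
    note zc = Q.central_torsionD[OF z(1)]
    have "(proj h1 \<otimes>\<^bsub>Q\<^esub> proj h2) [^]\<^bsub>Q\<^esub> (e * m)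
        = z [^]\<^bsub>Q\<^esub> (e * m choose 2) \<otimes>\<^bsub>Q\<^esub> (proj h1 [^]\<^bsub>Q\<^esub> (e * m) \<otimes>\<^bsub>Q\<^esub> proj h2 [^]\<^bsub>Q\<^esub> (e * m))"
      using h zc(1,2) by (intro Q.pow_mult_twisted z(2)) auto
    then show ?case
      using eng h Q.central_torsion_pow_dvd[OF z(1) k(2)] by (simp add: proj_mult)
  qed (simp_all add: gens)
qed

lemma pow_in_tensor_subgroup:
  assumes "k dvd (e choose 2) * m" "k dvd (e * m choose 2)" "s \<in> tensor_subgroup G N"
  shows "s [^]\<^bsub>T\<^esub> (e * m) \<in> tensor_subgroup G M"
proof -
  have s: "s \<in> carrier T" using assms(3) tensor_subgroup_subset[OF N.subset] by blast
  then show ?thesis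
    using proj_pow_eq_one[OF assms] proj_eq_one_iff[of "s [^]\<^bsub>T\<^esub> (e * m)"] by (simp add: proj_pow)
qed

end

lemma pow_in_tensor_subgroup_odd:
  assumes "odd e" "s \<in> tensor_subgroup G N"
  shows "s [^]\<^bsub>T\<^esub> e \<in> tensor_subgroup G M"
  using pow_in_tensor_subgroup[where k = e and m = 1] odd_dvd_choose_two[OF assms(1)] assms(2)
    qtensor_central_torsion commutator_mem_normal[OF N_normal] by simp

lemma pow_double_in_tensor_subgroup:
  assumes "s \<in> tensor_subgroup G N"
  shows "s [^]\<^bsub>T\<^esub> (e * 2) \<in> tensor_subgroup G M"
  using pow_in_tensor_subgroup[where k = e and m = 2] assms dvd_choose_two_mult_two
    dvd_double_choose_two qtensor_central_torsion commutator_mem_normal[OF N_normal] by simp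

lemma pow_in_tensor_subgroup_central:
  assumes "\<And>n g. n \<in> N \<Longrightarrow> g \<in> carrier G \<Longrightarrow> commutator G n g \<in> M \<and> commutator G g n \<in> M"
    and "s \<in> tensor_subgroup G N"
  shows "s [^]\<^bsub>T\<^esub> e \<in> tensor_subgroup G M"
  using pow_in_tensor_subgroup[where k = 1 and m = 1] assms
  by (simp add: proj_tensor_M Q.central_torsion_one)

end

section \<open>Descending the derived series\<close>

definition tensor_exponent_bound :: "nat \<Rightarrow> nat \<Rightarrow> nat" where
  "tensor_exponent_bound e i = (if odd e then e ^ i else 2 ^ (i - 1) * e ^ i)"

context nonabelian_tensor_square
begin

abbreviation derived_series where "derived_series i \<equiv> (derived G ^^ i) (carrier G)"

lemma derived_series_normal: "derived_series i \<lhd> G"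
  by (induction i) (simp_all add: normal_self derived_is_normal)

lemma commutator_derived_series:
  "x \<in> derived_series i \<Longrightarrow> y \<in> derived_series i \<Longrightarrow> commutator G x y \<in> derived_series (Suc i)"
  by (simp add: derived_def commutator_def) (rule generate.incl, blast)

lemma tensor_subgroup_step_derived_series:
  assumes "\<And>x. x \<in> carrier G \<Longrightarrow> x [^] e = \<one>"
  shows "tensor_subgroup_step G (derived_series i) (derived_series (Suc i)) e"
  by (intro tensor_subgroup_step.intro tensor_subgroup_step_axioms.intro nonabelian_tensor_square_axioms
      derived_series_normal commutator_derived_series assms)

text \<open>The first step gains no factor 2, because \<open>[G^{(0)}, G] = G^{(1)}\<close>.\<close>

lemma pow_tensor_exponent_bound:
  assumes pow_e: "\<And>x. x \<in> carrier G \<Longrightarrow> x [^] e = \<one>" and t: "t \<in> carrier T"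
  shows "t [^]\<^bsub>T\<^esub> tensor_exponent_bound e i \<in> tensor_subgroup G (derived_series i)"
proof (induction i)
  case 0 then show ?case using t tensor_subgroup_carrier by (simp add: tensor_exponent_bound_def)
next
  case (Suc i)
  interpret step: tensor_subgroup_step G "derived_series i" "derived_series (Suc i)" e
    by (rule tensor_subgroup_step_derived_series[OF pow_e])
  let ?s = "t [^]\<^bsub>T\<^esub> tensor_exponent_bound e i"
  consider "i = 0" | "i \<noteq> 0" "odd e" | "i \<noteq> 0" "even e" by blast
  then show ?case
  proof cases
    case 1
    have "t [^]\<^bsub>T\<^esub> e \<in> tensor_subgroup G (derived_series 1)"
      using step.pow_in_tensor_subgroup_central[of t] commutator_derived_series[of _ 0]
        tensor_subgroup_carrier t 1 by simp
    then show ?thesis using 1 by (simp add: tensor_exponent_bound_def)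
  next
    case 2
    then have "?s [^]\<^bsub>T\<^esub> e \<in> tensor_subgroup G (derived_series (Suc i))"
      using step.pow_in_tensor_subgroup_odd[OF _ Suc] by simp
    then show ?thesis using 2 t by (simp add: tensor_exponent_bound_def T.nat_pow_pow mult.commute)
  next
    case 3
    then have "?s [^]\<^bsub>T\<^esub> (e * 2) \<in> tensor_subgroup G (derived_series (Suc i))"
      using step.pow_double_in_tensor_subgroup[OF Suc] by simp
    moreover have "tensor_exponent_bound e (Suc i) = tensor_exponent_bound e i * (e * 2)"
      using 3 by (cases i) (simp_all add: tensor_exponent_bound_def)
    ultimately show ?thesis using t by (simp add: T.nat_pow_pow)
  qed
qed

end

section \<open>The Schur multiplier as a quotient of the tensor square\<close>

definition free_gen :: "'a \<Rightarrow> 'a word set" where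
  "free_gen x = pres_gen {} x"

definition free_eval :: "('a, 'b) monoid_scheme \<Rightarrow> 'a word set \<Rightarrow> 'a" where
  "free_eval G = presented_lift G (\<lambda>x. if x \<in> carrier G then x else \<one>\<^bsub>G\<^esub>)"

context nonabelian_tensor_square
begin

abbreviation F where "F \<equiv> free_on_carrier G"
abbreviation R where "R \<equiv> hopf_R G"
abbreviation FR where "FR \<equiv> mixed_commutator F (carrier F) R"
abbreviation FF where "FF \<equiv> mixed_commutator F (carrier F) (carrier F)"

lemma free_on_carrier_unfold: "F = presented_group (carrier G) {}"
  by (simp add: free_on_carrier_def)

sublocale F: group F
  unfolding free_on_carrier_unfold by (rule group_presented_group)

lemma
  shows free_eval_hom: "free_eval G \<in> hom F G"
    and free_eval_gen: "x \<in> carrier G \<Longrightarrow> free_eval G (free_gen x) = x"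
    and free_eval_class:
      "free_eval G (pres_class {} w) = eval_word G (\<lambda>x. if x \<in> carrier G then x else \<one>) w"
proof -
  let ?f = "\<lambda>x. if x \<in> carrier G then x else \<one>"
  have closed: "\<And>x. ?f x \<in> carrier G" by simp
  note lift = presented_lift[where R = "{}", OF group_axioms closed, simplified]
  show "free_eval G \<in> hom F G"
    unfolding free_eval_def free_on_carrier_unfold by (rule lift(2))
  show "x \<in> carrier G \<Longrightarrow> free_eval G (free_gen x) = x"
    unfolding free_eval_def free_gen_def by (simp add: lift(3))
  show "free_eval G (pres_class {} w) = eval_word G ?f w"
    unfolding free_eval_def by (rule lift(1))
qed

lemma free_eval_closed[simp]: "y \<in> carrier F \<Longrightarrow> free_eval G y \<in> carrier G"
  by (rule hom_in_carrier[OF free_eval_hom])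

lemma free_gen_closed[simp]: "x \<in> carrier G \<Longrightarrow> free_gen x \<in> carrier F"
  unfolding free_gen_def free_on_carrier_unfold by (rule pres_gen_closed)

lemma eval_word_eq_word_eval:
  "word_over (carrier G) w \<Longrightarrow> eval_word G (\<lambda>x. if x \<in> carrier G then x else \<one>) w = word_eval G w"
  by (induction w) (auto simp: word_eval_def split: prod.splits)

lemma hopf_R_eq_kernel: "R = kernel F G (free_eval G)"
proof
  show "R \<subseteq> kernel F G (free_eval G)"
  proof
    fix c assume "c \<in> R"
    then obtain w where c: "c \<in> carrier F" "w \<in> c" "word_over (carrier G) w" "word_eval G w = \<one>"
      unfolding hopf_R_def word_over_def by blast
    obtain w0 where w0: "c = pres_class {} w0"
      using c(1) unfolding free_on_carrier_unfold carrier_presented_group by blast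
    with c(2) have "(w0, w) \<in> pres_eq {}" by (simp add: pres_class_def)
    then have "c = pres_class {} w" by (simp add: w0 pres_class_eq_iff)
    then show "c \<in> kernel F G (free_eval G)"
      using c by (simp add: kernel_def free_eval_class eval_word_eq_word_eval)
  qed
  show "kernel F G (free_eval G) \<subseteq> R"
  proof
    fix c assume "c \<in> kernel F G (free_eval G)"
    then have c: "c \<in> carrier F" "free_eval G c = \<one>" by (auto simp: kernel_def)
    obtain w where w: "c = pres_class {} w" "word_over (carrier G) w"
      using c(1) unfolding free_on_carrier_unfold carrier_presented_group by blast
    have "word_eval G w = \<one>" using c(2) w by (simp add: free_eval_class eval_word_eq_word_eval)
    then show "c \<in> R" using c w pres_class_self unfolding hopf_R_def word_over_def by blast
  qed
qed

lemma hopf_R_normal: "R \<lhd> F"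
  unfolding hopf_R_eq_kernel
  by (rule group_hom.normal_kernel)
    (simp add: group_hom_def group_hom_axioms_def F.group_axioms group_axioms free_eval_hom)

lemma FR_normal: "FR \<lhd> F"
  unfolding mixed_commutator_def
proof (rule F.normal_generateI)
  interpret R: normal R F by (rule hopf_R_normal)
  show "{h \<otimes>\<^bsub>F\<^esub> k \<otimes>\<^bsub>F\<^esub> inv\<^bsub>F\<^esub> h \<otimes>\<^bsub>F\<^esub> inv\<^bsub>F\<^esub> k |h k. h \<in> carrier F \<and> k \<in> R} \<subseteq> carrier F"
    by auto
  fix h g assume h: "h \<in> {h \<otimes>\<^bsub>F\<^esub> k \<otimes>\<^bsub>F\<^esub> inv\<^bsub>F\<^esub> h \<otimes>\<^bsub>F\<^esub> inv\<^bsub>F\<^esub> k |h k. h \<in> carrier F \<and> k \<in> R}"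
    and g: "g \<in> carrier F"
  then obtain a k where ak: "h = commutator F a k" "a \<in> carrier F" "k \<in> R" by (auto simp: commutator_def)
  have "g \<otimes>\<^bsub>F\<^esub> h \<otimes>\<^bsub>F\<^esub> inv\<^bsub>F\<^esub> g
      = commutator F (g \<otimes>\<^bsub>F\<^esub> a \<otimes>\<^bsub>F\<^esub> inv\<^bsub>F\<^esub> g) (g \<otimes>\<^bsub>F\<^esub> k \<otimes>\<^bsub>F\<^esub> inv\<^bsub>F\<^esub> g)"
    using ak g by (simp add: F.conj_commutator)
  moreover have "g \<otimes>\<^bsub>F\<^esub> k \<otimes>\<^bsub>F\<^esub> inv\<^bsub>F\<^esub> g \<in> R" using R.inv_op_closed2 g ak by blast
  moreover have "g \<otimes>\<^bsub>F\<^esub> a \<otimes>\<^bsub>F\<^esub> inv\<^bsub>F\<^esub> g \<in> carrier F" using g ak by simp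
  ultimately show "g \<otimes>\<^bsub>F\<^esub> h \<otimes>\<^bsub>F\<^esub> inv\<^bsub>F\<^esub> g
      \<in> {h \<otimes>\<^bsub>F\<^esub> k \<otimes>\<^bsub>F\<^esub> inv\<^bsub>F\<^esub> h \<otimes>\<^bsub>F\<^esub> inv\<^bsub>F\<^esub> k |h k. h \<in> carrier F \<and> k \<in> R}"
    unfolding commutator_def by blast
qed

lemma FR_subset_R: "FR \<subseteq> R"
  unfolding mixed_commutator_def
proof (rule F.generate_subgroup_incl)
  interpret R: normal R F by (rule hopf_R_normal)
  show "subgroup R F" by (rule R.is_subgroup)
  show "{h \<otimes>\<^bsub>F\<^esub> k \<otimes>\<^bsub>F\<^esub> inv\<^bsub>F\<^esub> h \<otimes>\<^bsub>F\<^esub> inv\<^bsub>F\<^esub> k |h k. h \<in> carrier F \<and> k \<in> R} \<subseteq> R"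
    using R.inv_op_closed2 by auto
qed

lemma FR_subset_FF: "FR \<subseteq> FF"
proof -
  have "subgroup FF F"
    unfolding mixed_commutator_def by (rule F.generate_is_subgroup) auto
  then show ?thesis
    unfolding mixed_commutator_def
    by (rule F.generate_subgroup_incl[rotated])
      (use normal_imp_subgroup[OF hopf_R_normal] subgroup.subset in \<open>blast intro: generate.incl\<close>)
qed

definition Fq where "Fq = F Mod FR"

definition fproj where "fproj x = FR #>\<^bsub>F\<^esub> x"

sublocale Fq: group Fq unfolding Fq_def by (rule normal.factorgroup_is_group[OF FR_normal])

lemma fproj_hom: "fproj \<in> hom F Fq"
  unfolding fproj_def Fq_def using normal.r_coset_hom_Mod[OF FR_normal] by simp

lemma fproj_closed[simp]: "x \<in> carrier F \<Longrightarrow> fproj x \<in> carrier Fq"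
  by (rule hom_in_carrier[OF fproj_hom])

lemma fproj_mult: "a \<in> carrier F \<Longrightarrow> b \<in> carrier F \<Longrightarrow> fproj (a \<otimes>\<^bsub>F\<^esub> b) = fproj a \<otimes>\<^bsub>Fq\<^esub> fproj b"
  by (rule hom_mult[OF fproj_hom])

lemma fproj_inv: "a \<in> carrier F \<Longrightarrow> fproj (inv\<^bsub>F\<^esub> a) = inv\<^bsub>Fq\<^esub> fproj a"
  by (rule hom_inv_group[OF fproj_hom _ F.group_axioms Fq.group_axioms])

lemma fproj_pow: "a \<in> carrier F \<Longrightarrow> fproj (a [^]\<^bsub>F\<^esub> (n::nat)) = fproj a [^]\<^bsub>Fq\<^esub> n"
  by (rule hom_nat_pow[OF fproj_hom _ F.group_axioms Fq.group_axioms])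

lemma fproj_commutator:
  "a \<in> carrier F \<Longrightarrow> b \<in> carrier F \<Longrightarrow> fproj (commutator F a b) = commutator Fq (fproj a) (fproj b)"
  by (simp add: commutator_def fproj_mult fproj_inv)

lemma fproj_eq_one_iff: "x \<in> carrier F \<Longrightarrow> fproj x = \<one>\<^bsub>Fq\<^esub> \<longleftrightarrow> x \<in> FR"
  using F.coset_join1[OF _ _ normal_imp_subgroup[OF FR_normal]]
    F.coset_join2[OF _ normal_imp_subgroup[OF FR_normal]]
  unfolding fproj_def Fq_def by auto

lemma fproj_R_central:
  assumes r: "r \<in> R" and q: "q \<in> carrier Fq"
  shows "fproj r \<otimes>\<^bsub>Fq\<^esub> q = q \<otimes>\<^bsub>Fq\<^esub> fproj r"
proof -
  obtain y where y: "y \<in> carrier F" "q = fproj y"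
    using q unfolding fproj_def Fq_def carrier_FactGroup by blast
  have rc: "r \<in> carrier F" using r normal_imp_subgroup[OF hopf_R_normal] subgroup.subset by blast
  have "commutator F y r \<in> FR" unfolding mixed_commutator_def commutator_def
    using y r by (intro generate.incl) blast
  then have "commutator Fq (fproj y) (fproj r) = \<one>\<^bsub>Fq\<^esub>"
    using y rc by (simp add: fproj_eq_one_iff fproj_commutator[symmetric])
  then show ?thesis
    using y rc by (simp add: Fq.commutator_eq_one_imp_commute)
qed

text \<open>\<open>y\<close> is \<open>free_gen (free_eval G y)\<close> times an element of \<open>R\<close>, and \<open>R\<close> is central modulo \<open>[F, R]\<close>.\<close>

lemma fproj_eq_free_gen_mult_central:
  assumes y: "y \<in> carrier F"
  obtains z where "z \<in> carrier Fq" "\<And>q. q \<in> carrier Fq \<Longrightarrow> z \<otimes>\<^bsub>Fq\<^esub> q = q \<otimes>\<^bsub>Fq\<^esub> z"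
    "fproj y = fproj (free_gen (free_eval G y)) \<otimes>\<^bsub>Fq\<^esub> z"
proof -
  define r where "r = inv\<^bsub>F\<^esub> (free_gen (free_eval G y)) \<otimes>\<^bsub>F\<^esub> y"
  have rc: "r \<in> carrier F" using y by (simp add: r_def)
  have "free_eval G r = inv (free_eval G (free_gen (free_eval G y))) \<otimes> free_eval G y"
    using y by (simp add: r_def hom_mult[OF free_eval_hom]
        hom_inv_group[OF free_eval_hom _ F.group_axioms group_axioms])
  then have "r \<in> R" using rc y by (simp add: hopf_R_eq_kernel kernel_def free_eval_gen)
  moreover have "y = free_gen (free_eval G y) \<otimes>\<^bsub>F\<^esub> r" using y by (simp add: r_def)
  ultimately show ?thesis
    using that[of "fproj r"] fproj_R_central rc y by (metis fproj_closed fproj_mult free_gen_closed free_eval_closed)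
qed

lemma commutator_fproj:
  assumes "a \<in> carrier F" "b \<in> carrier F"
  shows "commutator Fq (fproj a) (fproj b)
       = commutator Fq (fproj (free_gen (free_eval G a))) (fproj (free_gen (free_eval G b)))"
proof -
  obtain z where z: "z \<in> carrier Fq" "\<And>q. q \<in> carrier Fq \<Longrightarrow> z \<otimes>\<^bsub>Fq\<^esub> q = q \<otimes>\<^bsub>Fq\<^esub> z"
    "fproj a = fproj (free_gen (free_eval G a)) \<otimes>\<^bsub>Fq\<^esub> z"
    using fproj_eq_free_gen_mult_central[OF assms(1)] by blast
  obtain w where w: "w \<in> carrier Fq" "\<And>q. q \<in> carrier Fq \<Longrightarrow> w \<otimes>\<^bsub>Fq\<^esub> q = q \<otimes>\<^bsub>Fq\<^esub> w"
    "fproj b = fproj (free_gen (free_eval G b)) \<otimes>\<^bsub>Fq\<^esub> w"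
    using fproj_eq_free_gen_mult_central[OF assms(2)] by blast
  show ?thesis unfolding z(3) w(3)
    by (rule Fq.commutator_mult_central[OF z(2) w(2)]) (use assms z(1) w(1) in simp_all)
qed

abbreviation free_class where "free_class x \<equiv> fproj (free_gen x)"

lemma free_eval_free_gen_mult:
  "g \<in> carrier G \<Longrightarrow> g' \<in> carrier G \<Longrightarrow> free_eval G (free_gen g \<otimes>\<^bsub>F\<^esub> free_gen g') = g \<otimes> g'"
  by (simp add: hom_mult[OF free_eval_hom] free_eval_gen)

lemma free_eval_free_gen_conj:
  "g \<in> carrier G \<Longrightarrow> g' \<in> carrier G \<Longrightarrow>
   free_eval G (free_gen g \<otimes>\<^bsub>F\<^esub> free_gen g' \<otimes>\<^bsub>F\<^esub> inv\<^bsub>F\<^esub> free_gen g) = gconj G g g'"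
  by (simp add: hom_mult[OF free_eval_hom] free_eval_gen gconj_def
      hom_inv_group[OF free_eval_hom _ F.group_axioms group_axioms])

lemma commutator_free_class_gconj:
  assumes "g \<in> carrier G" "a \<in> carrier G" "b \<in> carrier G"
  shows "commutator Fq (free_class (gconj G g a)) (free_class (gconj G g b)) =
      commutator Fq (free_class g \<otimes>\<^bsub>Fq\<^esub> free_class a \<otimes>\<^bsub>Fq\<^esub> inv\<^bsub>Fq\<^esub> free_class g)
        (free_class g \<otimes>\<^bsub>Fq\<^esub> free_class b \<otimes>\<^bsub>Fq\<^esub> inv\<^bsub>Fq\<^esub> free_class g)"
  using commutator_fproj[of "free_gen g \<otimes>\<^bsub>F\<^esub> free_gen a \<otimes>\<^bsub>F\<^esub> inv\<^bsub>F\<^esub> free_gen g"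
      "free_gen g \<otimes>\<^bsub>F\<^esub> free_gen b \<otimes>\<^bsub>F\<^esub> inv\<^bsub>F\<^esub> free_gen g"] assms
  by (simp add: free_eval_free_gen_conj fproj_mult fproj_inv)

lemma commutator_free_class_mult_left:
  assumes "g \<in> carrier G" "g' \<in> carrier G" "h \<in> carrier G"
  shows "commutator Fq (free_class (g \<otimes> g')) (free_class h)
      = commutator Fq (free_class (gconj G g g')) (free_class (gconj G g h))
        \<otimes>\<^bsub>Fq\<^esub> commutator Fq (free_class g) (free_class h)"
proof -
  have "commutator Fq (free_class (g \<otimes> g')) (free_class h)
      = commutator Fq (free_class g \<otimes>\<^bsub>Fq\<^esub> free_class g') (free_class h)"
    using commutator_fproj[of "free_gen g \<otimes>\<^bsub>F\<^esub> free_gen g'" "free_gen h"] assms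
    by (simp add: free_eval_free_gen_mult free_eval_gen fproj_mult)
  then show ?thesis
    using commutator_free_class_gconj[OF assms]
      Fq.commutator_mult_left[of "free_class g" "free_class g'" "free_class h"] assms by simp
qed

lemma commutator_free_class_mult_right:
  assumes "g \<in> carrier G" "h \<in> carrier G" "h' \<in> carrier G"
  shows "commutator Fq (free_class g) (free_class (h \<otimes> h'))
      = commutator Fq (free_class g) (free_class h)
        \<otimes>\<^bsub>Fq\<^esub> commutator Fq (free_class (gconj G h g)) (free_class (gconj G h h'))"
proof -
  have "commutator Fq (free_class g) (free_class (h \<otimes> h'))
      = commutator Fq (free_class g) (free_class h \<otimes>\<^bsub>Fq\<^esub> free_class h')"
    using commutator_fproj[of "free_gen g" "free_gen h \<otimes>\<^bsub>F\<^esub> free_gen h'"] assms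
    by (simp add: free_eval_free_gen_mult free_eval_gen fproj_mult)
  then show ?thesis
    using commutator_free_class_gconj[OF assms(2,1,3)]
      Fq.commutator_mult_right[of "free_class g" "free_class h" "free_class h'"] assms by simp
qed

definition tensor_to_Fq where
  "tensor_to_Fq = tensor_lift G Fq (\<lambda>g h. commutator Fq (free_class g) (free_class h))"

lemma
  shows tensor_to_Fq_hom: "tensor_to_Fq \<in> hom T Fq"
    and tensor_to_Fq_tensor: "g \<in> carrier G \<Longrightarrow> h \<in> carrier G \<Longrightarrow>
      tensor_to_Fq (tensor G g h) = commutator Fq (free_class g) (free_class h)"
  unfolding tensor_to_Fq_def
  by (rule tensor_lift[OF Fq.group_axioms], simp,
      simp add: commutator_free_class_mult_left, simp add: commutator_free_class_mult_right)+

lemma fproj_commutator_in_image: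
  assumes "a \<in> carrier F" "b \<in> carrier F"
  shows "fproj (commutator F a b) = tensor_to_Fq (tensor G (free_eval G a) (free_eval G b))"
  using assms commutator_fproj[OF assms] by (simp add: fproj_commutator tensor_to_Fq_tensor)

lemma fproj_FF_subset_image: "fproj ` FF \<subseteq> tensor_to_Fq ` carrier T"
proof -
  let ?C = "{h \<otimes>\<^bsub>F\<^esub> k \<otimes>\<^bsub>F\<^esub> inv\<^bsub>F\<^esub> h \<otimes>\<^bsub>F\<^esub> inv\<^bsub>F\<^esub> k |h k. h \<in> carrier F \<and> k \<in> carrier F}"
  interpret fproj: group_hom F Fq fproj
    by (simp add: group_hom_def group_hom_axioms_def F.group_axioms Fq.group_axioms fproj_hom)
  interpret tensor_to_Fq: group_hom T Fq tensor_to_Fq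
    by (simp add: group_hom_def group_hom_axioms_def T.group_axioms Fq.group_axioms tensor_to_Fq_hom)
  have "fproj ` ?C \<subseteq> tensor_to_Fq ` carrier T"
  proof
    fix y assume "y \<in> fproj ` ?C"
    then obtain a b where y: "y = fproj (commutator F a b)" and ab: "a \<in> carrier F" "b \<in> carrier F"
      unfolding commutator_def by blast
    have "tensor G (free_eval G a) (free_eval G b) \<in> carrier T"
      using ab by (intro tensor_closed free_eval_closed)
    then show "y \<in> tensor_to_Fq ` carrier T"
      unfolding y fproj_commutator_in_image[OF ab] by (rule imageI)
  qed
  moreover have "fproj ` FF = generate Fq (fproj ` ?C)"
    unfolding mixed_commutator_def by (rule fproj.generate_img[symmetric]) blast
  ultimately show ?thesis
    using Fq.generate_subgroup_incl[OF _ tensor_to_Fq.img_is_subgroup] by simp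
qed

text \<open>Hopf's formula exhibits \<open>M(G)\<close> as a subgroup of \<open>[F, F]/[F, R]\<close>, which is the image of
  \<open>G \<otimes> G\<close> under \<open>tensor_to_Fq\<close>.\<close>

lemma schur_multiplier_exponent_dvd:
  assumes B: "\<And>t. t \<in> carrier T \<Longrightarrow> t [^]\<^bsub>T\<^esub> B = \<one>\<^bsub>T\<^esub>"
  shows "group_exponent (schur_multiplier G) dvd B"
proof -
  define H where "H = R \<inter> FF"
  have H: "subgroup H F" unfolding H_def
    by (rule F.subgroups_Inter_pair[OF normal_imp_subgroup[OF hopf_R_normal]])
      (unfold mixed_commutator_def, rule F.generate_is_subgroup, auto)
  have FR_H: "FR \<subseteq> H" using FR_subset_R FR_subset_FF by (auto simp: H_def)
  define FH where "FH = F\<lparr>carrier := H\<rparr>"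
  have "group FH" unfolding FH_def by (rule F.subgroup_imp_group[OF H])
  have normal_FH: "FR \<lhd> FH"
    unfolding FH_def by (rule F.normal_restrict_supergroup[OF H FR_normal FR_H])
  have schur: "schur_multiplier G = FH Mod FR"
    by (simp add: schur_multiplier_def FH_def H_def Let_def)
  interpret S: group "FH Mod FR" by (rule normal.factorgroup_is_group[OF normal_FH])
  show ?thesis unfolding schur
  proof (rule S.group_exponent_dvd)
    fix Y assume "Y \<in> carrier (FH Mod FR)"
    then obtain h where h: "h \<in> H" "Y = FR #>\<^bsub>FH\<^esub> h"
      unfolding carrier_FactGroup FH_def by auto
    have hF: "h \<in> carrier F" using h H subgroup.subset by blast
    have "fproj h \<in> tensor_to_Fq ` carrier T"
      using fproj_FF_subset_image h(1) unfolding H_def by blast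
    then obtain t where t: "t \<in> carrier T" "fproj h = tensor_to_Fq t" by blast
    have "fproj (h [^]\<^bsub>F\<^esub> B) = tensor_to_Fq (t [^]\<^bsub>T\<^esub> B)"
      using hF t by (simp add: fproj_pow hom_nat_pow[OF tensor_to_Fq_hom _ T.group_axioms Fq.group_axioms])
    also have "\<dots> = \<one>\<^bsub>Fq\<^esub>"
      using t B hom_one[OF tensor_to_Fq_hom T.group_axioms Fq.group_axioms] by simp
    finally have pow_FR: "h [^]\<^bsub>F\<^esub> B \<in> FR" using hF fproj_eq_one_iff by simp
    have "Y [^]\<^bsub>FH Mod FR\<^esub> B = FR #>\<^bsub>FH\<^esub> (h [^]\<^bsub>FH\<^esub> B)"
      unfolding h(2)
      by (rule hom_nat_pow[OF normal.r_coset_hom_Mod[OF normal_FH] _ \<open>group FH\<close> S.group_axioms, symmetric])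
        (simp add: FH_def h)
    also have "h [^]\<^bsub>FH\<^esub> B = h [^]\<^bsub>F\<^esub> B" unfolding FH_def by (rule F.nat_pow_consistent[symmetric])
    also have "FR #>\<^bsub>FH\<^esub> (h [^]\<^bsub>F\<^esub> B) = FR #>\<^bsub>F\<^esub> (h [^]\<^bsub>F\<^esub> B)"
      by (simp add: r_coset_def FH_def)
    also have "\<dots> = FR"
      using F.coset_join2[OF _ normal_imp_subgroup[OF FR_normal] pow_FR] hF by simp
    finally show "Y [^]\<^bsub>FH Mod FR\<^esub> B = \<one>\<^bsub>FH Mod FR\<^esub>" by simp
  qed
qed

end

lemma (in group) derived_series_derived_length:
  assumes "solvable G"
  shows "(derived G ^^ derived_length G) (carrier G) = {\<one>}"
  unfolding derived_length_def
  by (rule LeastI_ex) (use assms solvable_iff_trivial_derived_seq in blast)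

theorem theorem6p3:
  fixes G :: "('a, 'b) monoid_scheme" and d :: nat
  assumes "group G" and "solvable G" and "derived_length G = d"
  shows "(odd (group_exponent G) \<longrightarrow>
           group_exponent (tensor_square G) dvd (group_exponent G) ^ d \<and>
           group_exponent (schur_multiplier G) dvd (group_exponent G) ^ d)
       \<and> (even (group_exponent G) \<longrightarrow>
           group_exponent (tensor_square G) dvd 2 ^ (d - 1) * (group_exponent G) ^ d \<and>
           group_exponent (schur_multiplier G) dvd 2 ^ (d - 1) * (group_exponent G) ^ d)"
proof -
  interpret nonabelian_tensor_square G by (rule nonabelian_tensor_square.intro) fact
  let ?B = "tensor_exponent_bound (group_exponent G) d"
  have "derived_series d = {\<one>\<^bsub>G\<^esub>}"
    using derived_series_derived_length assms by simp
  then have pow_B: "t [^]\<^bsub>T\<^esub> ?B = \<one>\<^bsub>T\<^esub>" if "t \<in> carrier T" for t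
    using pow_tensor_exponent_bound[OF pow_group_exponent that, of d] tensor_subgroup_trivial by simp
  have "group_exponent T dvd ?B" "group_exponent (schur_multiplier G) dvd ?B"
    using T.group_exponent_dvd schur_multiplier_exponent_dvd pow_B by blast+
  then show ?thesis by (simp add: tensor_exponent_bound_def split: if_splits)
qed

end
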